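(* Let $\mathbb{K}$ be a field with $\mathrm{char}(\mathbb{K})=p>0$, let $\delta\in\mathbb{F}_p\subset\mathbb{K}$, and let $r,s\in\mathbb{Z}_{\geq 0}$ not both zero. If the walled Brauer algebra $\mathcal{B}_{r,s}(\delta)$ is not semisimple, then $\mathcal{B}_{r+1,s+1}(\delta)$ is not semisimple.
   Context: The walled Brauer algebra $\mathcal{B}_{r,s}(\delta)$ is the unital associative $\mathbb{K}$-algebra generated by $\{\sigma_i\mid i=1,\dots,r+s-1,\ i\neq r\}\cup\{u_r\}$ subject to: $\sigma_i^2=1$; $\sigma_i\sigma_j=\sigma_j\sigma_i$ for $|i-j|>1$; $\sigma_i\sigma_j\sigma_i=\sigma_j\sigma_i\sigma_j$ for $|i-j|=1$; $u_r^2=\delta u_r$; $u_r=u_r\sigma_{r-1}u_r=u_r\sigma_{r+1}u_r$; $u_r\sigma_j=\sigma_ju_r$ for $|r-j|>1$; $u_r\sigma_{r-1}\sigma_{r+1}u_r\sigma_{r-1}\sigma_{r+1}=u_r\sigma_{r-1}\sigma_{r+1}u_r=\sigma_{r-1}\sigma_{r+1}u_r\sigma_{r-1}\sigma_{r+1}u_r$. (Equivalently, the diagram algebra of walled Brauer diagrams with $r$ points left and $s$ points right of the wall, closed loops evaluating to $\delta$.) *)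

theory Defs
  imports Main
begin

text \<open>Points of a diagram on n strands: (False, i) is the i-th top point,
  (True, i) the i-th bottom point, for i < n (0-indexed).  A diagram is a
  fixed-point-free involution of these points (a perfect matching), extended by
  the identity outside, so that the set of diagrams is finite.\<close>

type_synonym pt = "bool \<times> nat"
type_synonym diagram = "pt \<Rightarrow> pt"

definition pts :: "nat \<Rightarrow> pt set" where
  "pts n = UNIV \<times> {..<n}"

definition brauer_diagram :: "nat \<Rightarrow> diagram \<Rightarrow> bool" where
  "brauer_diagram n d \<longleftrightarrow>
     (\<forall>x\<in>pts n. d x \<in> pts n \<and> d x \<noteq> x \<and> d (d x) = x) \<and>
     (\<forall>x. x \<notin> pts n \<longrightarrow> d x = x)"

definition left_of_wall :: "nat \<Rightarrow> pt \<Rightarrow> bool" where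
  "left_of_wall r x \<longleftrightarrow> snd x < r"

definition walled_diagram :: "nat \<Rightarrow> nat \<Rightarrow> diagram \<Rightarrow> bool" where
  "walled_diagram r s d \<longleftrightarrow> brauer_diagram (r + s) d \<and>
     (\<forall>x\<in>pts (r + s).
        (fst x \<noteq> fst (d x) \<longrightarrow> (left_of_wall r x \<longleftrightarrow> left_of_wall r (d x))) \<and>
        (fst x = fst (d x) \<longrightarrow> (left_of_wall r x \<longleftrightarrow> \<not> left_of_wall r (d x))))"

definition WB :: "nat \<Rightarrow> nat \<Rightarrow> diagram set" where
  "WB r s = {d. walled_diagram r s d}"

text \<open>To compose d1 * d2 (d1 on top of d2) we place three rows of points,
  levels 0, 1, 2: d1 connects level 0 (its top) to level 1 (its bottom), d2
  connects level 1 (its top) to level 2 (its bottom).\<close>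

definition lift_top :: "pt \<Rightarrow> nat \<times> nat" where
  "lift_top x = (if fst x then 1 else 0, snd x)"

definition lift_bot :: "pt \<Rightarrow> nat \<times> nat" where
  "lift_bot x = (if fst x then 2 else 1, snd x)"

definition stack_edges :: "nat \<Rightarrow> diagram \<Rightarrow> diagram \<Rightarrow> ((nat \<times> nat) \<times> (nat \<times> nat)) set" where
  "stack_edges n d1 d2 =
     {(lift_top x, lift_top (d1 x)) | x. x \<in> pts n} \<union>
     {(lift_bot x, lift_bot (d2 x)) | x. x \<in> pts n}"

definition stack_conn :: "nat \<Rightarrow> diagram \<Rightarrow> diagram \<Rightarrow> ((nat \<times> nat) \<times> (nat \<times> nat)) set" where
  "stack_conn n d1 d2 = (stack_edges n d1 d2)\<^sup>*"

definition outer :: "pt \<Rightarrow> nat \<times> nat" where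
  "outer x = (if fst x then 2 else 0, snd x)"

definition compose :: "nat \<Rightarrow> diagram \<Rightarrow> diagram \<Rightarrow> diagram" where
  "compose n d1 d2 = (\<lambda>x. if x \<in> pts n
      then (THE y. y \<in> pts n \<and> y \<noteq> x \<and> (outer x, outer y) \<in> stack_conn n d1 d2)
      else x)"

definition loops :: "nat \<Rightarrow> diagram \<Rightarrow> diagram \<Rightarrow> nat" where
  "loops n d1 d2 = card {stack_conn n d1 d2 `` {(1, i)} | i.
      i < n \<and> stack_conn n d1 d2 `` {(1, i)} \<subseteq> {1} \<times> UNIV}"

text \<open>Elements are K-valued functions on diagrams supported on WB r s,
  i.e. K-linear combinations of walled Brauer diagrams.\<close>

definition wb_carrier :: "nat \<Rightarrow> nat \<Rightarrow> (diagram \<Rightarrow> 'k::field) set" where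
  "wb_carrier r s = {a. \<forall>d. d \<notin> WB r s \<longrightarrow> a d = 0}"

definition wb_mult :: "nat \<Rightarrow> nat \<Rightarrow> 'k::field \<Rightarrow>
    (diagram \<Rightarrow> 'k) \<Rightarrow> (diagram \<Rightarrow> 'k) \<Rightarrow> (diagram \<Rightarrow> 'k)" where
  "wb_mult r s \<delta> a b = (\<lambda>d. \<Sum>d1\<in>WB r s. \<Sum>d2\<in>WB r s.
      if compose (r + s) d1 d2 = d
      then a d1 * b d2 * \<delta> ^ loops (r + s) d1 d2 else 0)"

definition wb_ideal :: "nat \<Rightarrow> nat \<Rightarrow> 'k::field \<Rightarrow> (diagram \<Rightarrow> 'k) set \<Rightarrow> bool" where
  "wb_ideal r s \<delta> I \<longleftrightarrow> I \<subseteq> wb_carrier r s \<and> (\<lambda>_. 0) \<in> I \<and>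
     (\<forall>x\<in>I. \<forall>y\<in>I. (\<lambda>d. x d + y d) \<in> I) \<and>
     (\<forall>c. \<forall>x\<in>I. (\<lambda>d. c * x d) \<in> I) \<and>
     (\<forall>a\<in>wb_carrier r s. \<forall>x\<in>I. wb_mult r s \<delta> a x \<in> I \<and> wb_mult r s \<delta> x a \<in> I)"

fun wb_prod :: "nat \<Rightarrow> nat \<Rightarrow> 'k::field \<Rightarrow> (diagram \<Rightarrow> 'k) list \<Rightarrow> (diagram \<Rightarrow> 'k)" where
  "wb_prod r s \<delta> [] = (\<lambda>_. 0)"
| "wb_prod r s \<delta> [x] = x"
| "wb_prod r s \<delta> (x # y # ys) = wb_mult r s \<delta> x (wb_prod r s \<delta> (y # ys))"

definition wb_nilpotent_ideal :: "nat \<Rightarrow> nat \<Rightarrow> 'k::field \<Rightarrow> (diagram \<Rightarrow> 'k) set \<Rightarrow> bool" where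
  "wb_nilpotent_ideal r s \<delta> I \<longleftrightarrow> wb_ideal r s \<delta> I \<and>
     (\<exists>m>0. \<forall>xs. length xs = m \<longrightarrow> set xs \<subseteq> I \<longrightarrow> wb_prod r s \<delta> xs = (\<lambda>_. 0))"

text \<open>A finite-dimensional algebra is semisimple iff its (Jacobson) radical is
  zero, i.e. iff it has no nonzero nilpotent two-sided ideal.\<close>

definition wb_semisimple :: "nat \<Rightarrow> nat \<Rightarrow> 'k::field \<Rightarrow> bool" where
  "wb_semisimple r s \<delta> \<longleftrightarrow>
     (\<forall>I. wb_nilpotent_ideal r s \<delta> I \<longrightarrow> I = {\<lambda>_. 0})"

end

theory Submission
  imports Defs "HOL-Library.FuncSet"
begin

text \<open>Write A = B_{r+1,s+1}(\<delta>) and B = B_{r,s}(\<delta>). As r + s > 0, there is a strand k0; add a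
  new strand next to the wall, joined to the position of k0 by a cap at the top and by a cup
  at the bottom, both crossing the wall. This turns each walled (r,s)-diagram d into a walled
  (r+1,s+1)-diagram lift d, injectively, compatibly with composition and without creating
  closed loops. Hence the linear extension \<psi> : B \<rightarrow> A of lift is multiplicative, and
  e = \<psi>(1) is an idempotent diagram with e A e = \<psi>(B). If I \<noteq> 0 is an ideal of B with
  I^m = 0, then J = A \<psi>(I) A is a nonzero ideal of A, and since
  \<psi>(I) A \<psi>(I) = \<psi>(I) (e A e) \<psi>(I) \<subseteq> \<psi>(I B I), also J^m \<subseteq> A \<psi>(I^m) A = 0.

  That composition of diagrams is well defined, preserves walled diagrams, is associative and
  adds up closed loops rests on two observations: the partner of a point in a composite is the
  far end of an alternating walk along the edges of the two factors, and diagrams on n strands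
  act faithfully on labellings of the strands by N \<ge> 2n colours, a composite acting as the
  product of the factors divided by N per closed loop.\<close>

hide_const (open) FuncSet.compose

section \<open>Alternating walks of two involutions\<close>

text \<open>Starting at a point fixed by Q but moved by P, apply P, Q, P, ... alternately.
  The walk runs along a path of the graph whose edges are the P- and Q-moves and
  stops (at the first step that would not move) at the other end of that path.
  This is how the partner of a point in a composite of two diagrams is found.\<close>

locale involution_pair =
  fixes V :: "'v set" and P Q :: "'v \<Rightarrow> 'v"
  assumes finite_V: "finite V"
    and P_in: "v \<in> V \<Longrightarrow> P v \<in> V" and Q_in: "v \<in> V \<Longrightarrow> Q v \<in> V"
    and P_P: "v \<in> V \<Longrightarrow> P (P v) = v" and Q_Q: "v \<in> V \<Longrightarrow> Q (Q v) = v"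
begin

lemma swap: "involution_pair V Q P"
  by unfold_locales (auto simp: finite_V P_in Q_in P_P Q_Q)

definition step :: "nat \<Rightarrow> 'v \<Rightarrow> 'v" where
  "step k = (if even k then P else Q)"

fun walk :: "'v \<Rightarrow> nat \<Rightarrow> 'v" where
  "walk x 0 = x"
| "walk x (Suc k) = step k (walk x k)"

definition edges :: "('v \<times> 'v) set" where
  "edges = {(v, P v) | v. v \<in> V} \<union> {(v, Q v) | v. v \<in> V}"

lemma edges_swap: "involution_pair.edges V Q P = edges"
  by (auto simp: involution_pair.edges_def[OF swap] edges_def)

lemma edges_sym: "(u, v) \<in> edges \<Longrightarrow> (v, u) \<in> edges"
  unfolding edges_def by (force simp: P_in Q_in P_P Q_Q)

lemma rtrancl_edges_sym: "(u, v) \<in> edges\<^sup>* \<Longrightarrow> (v, u) \<in> edges\<^sup>*"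
  by (induction rule: rtrancl_induct) (auto intro: converse_rtrancl_into_rtrancl edges_sym)

lemma rtrancl_edges_in: "(u, v) \<in> edges\<^sup>* \<Longrightarrow> u \<in> V \<Longrightarrow> v \<in> V"
  by (induction rule: rtrancl_induct) (auto simp: edges_def P_in Q_in)

lemma rtrancl_edges_outside: "(u, v) \<in> edges\<^sup>* \<Longrightarrow> u \<notin> V \<Longrightarrow> v = u"
  by (induction rule: converse_rtrancl_induct) (auto simp: edges_def)

lemma step_in: "v \<in> V \<Longrightarrow> step k v \<in> V"
  by (simp add: step_def P_in Q_in)

lemma step_step: "v \<in> V \<Longrightarrow> step k (step k v) = v"
  by (simp add: step_def P_P Q_Q)

lemma walk_in: "x \<in> V \<Longrightarrow> walk x k \<in> V"
  by (induction k) (auto simp: step_in)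

lemma step_walk_Suc: "x \<in> V \<Longrightarrow> step k (walk x (Suc k)) = walk x k"
  by (simp add: step_step walk_in)

lemma walk_in_rtrancl_edges: "x \<in> V \<Longrightarrow> (x, walk x k) \<in> edges\<^sup>*"
proof (induction k)
  case (Suc k)
  have "(walk x k, walk x (Suc k)) \<in> edges"
    using walk_in[OF Suc.prems, of k] by (auto simp: edges_def step_def)
  then show ?case using Suc by (meson rtrancl_into_rtrancl)
qed simp

context
  fixes x assumes x_in: "x \<in> V" and Q_fix: "Q x = x" and P_moves: "P x \<noteq> x"
begin

text \<open>Returning to an earlier point would force the walk to retrace its last step, or to pass
  through x, which is fixed by Q.\<close>

lemma walk_Suc_notin:
  assumes inj: "inj_on (walk x) {..j}" and moving: "\<forall>k\<le>j. step k (walk x k) \<noteq> walk x k"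
  shows "walk x (Suc j) \<notin> walk x ` {..j}"
proof
  assume "walk x (Suc j) \<in> walk x ` {..j}"
  then obtain i where i: "i \<le> j" "walk x (Suc j) = walk x i" by auto
  have prev: "walk x j = step j (walk x (Suc j))" using step_walk_Suc[OF x_in] by simp
  show False
  proof (cases i)
    case 0
    then have e: "walk x (Suc j) = x" using i by simp
    show False
    proof (cases "even j")
      case True
      then have "walk x j = walk x 1" using prev e by (simp add: step_def)
      moreover have "j \<noteq> 0" using True e P_moves by (cases j) (auto simp: step_def)
      ultimately have "j = 1" by (intro inj_onD[OF inj]) auto
      then show False using True by simp
    next
      case False
      then have "walk x j = walk x 0" using prev e Q_fix by (simp add: step_def)
      then have "j = 0" by (intro inj_onD[OF inj]) auto
      then show False using False by simp
    qed
  next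
    case (Suc i')
    have prev_i: "walk x i' = step i' (walk x (Suc i'))" using step_walk_Suc[OF x_in] by simp
    show False
    proof (cases "even j = even i'")
      case True
      then have "walk x j = walk x i'" using prev prev_i i Suc by (simp add: step_def)
      then have "j = i'" using i Suc by (intro inj_onD[OF inj]) auto
      then show False using i Suc by simp
    next
      case False
      then have "step j = step (Suc i')" by (simp add: step_def)
      then have j_eq: "walk x j = walk x (Suc (Suc i'))" using prev i Suc by simp
      show False
      proof (cases "Suc (Suc i') \<le> j")
        case True
        then have "j = Suc (Suc i')" using j_eq by (intro inj_onD[OF inj]) auto
        then show False using False by simp
      next
        case False
        then have "j = Suc i'" using i Suc by simp
        then have "step j (walk x j) = walk x j" using i Suc by simp
        then show False using moving by auto
      qed
    qed
  qed
qed

lemma inj_on_walk: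
  "(\<forall>k<j. step k (walk x k) \<noteq> walk x k) \<Longrightarrow> inj_on (walk x) {..j}"
proof (induction j)
  case (Suc j)
  then have "inj_on (walk x) {..j}" "walk x (Suc j) \<notin> walk x ` {..j}"
    using walk_Suc_notin by auto
  moreover have "{..Suc j} = insert (Suc j) {..j}" by auto
  ultimately show ?case by simp
qed simp

lemma ex_walk_stalls: "\<exists>k. step k (walk x k) = walk x k"
proof (rule ccontr)
  assume "\<nexists>k. step k (walk x k) = walk x k"
  then have "inj_on (walk x) {..card V}" using inj_on_walk by auto
  then have "card (walk x ` {..card V}) = Suc (card V)" by (simp add: card_image)
  moreover have "walk x ` {..card V} \<subseteq> V" using walk_in[OF x_in] by auto
  ultimately have "Suc (card V) \<le> card V" using card_mono[OF finite_V] by metis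
  then show False by simp
qed

definition walk_length :: nat where
  "walk_length = (LEAST k. step k (walk x k) = walk x k)"

abbreviation walk_end :: 'v where
  "walk_end \<equiv> walk x walk_length"

lemma step_walk_end: "step walk_length walk_end = walk_end"
  unfolding walk_length_def by (rule LeastI_ex[OF ex_walk_stalls])

lemma step_walk_before_end: "k < walk_length \<Longrightarrow> step k (walk x k) \<noteq> walk x k"
  unfolding walk_length_def by (rule not_less_Least)

lemma walk_length_pos: "walk_length > 0"
proof (rule ccontr)
  assume "\<not> walk_length > 0"
  then have "walk_length = 0" by simp
  then show False using step_walk_end P_moves by (simp add: step_def)
qed

lemma inj_on_walk_length: "inj_on (walk x) {..walk_length}"
  using inj_on_walk step_walk_before_end by blast

lemma walk_interior_moved:
  assumes "0 < k" "k < walk_length"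
  shows "P (walk x k) \<noteq> walk x k \<and> Q (walk x k) \<noteq> walk x k"
proof -
  obtain k' where k': "k = Suc k'" using assms by (cases k) auto
  have "step k' (walk x k) = walk x k'" using step_walk_Suc[OF x_in] k' by simp
  moreover have "step k' (walk x k') \<noteq> walk x k'" using step_walk_before_end assms k' by simp
  ultimately have "step k' (walk x k) \<noteq> walk x k" by auto
  moreover have "step k (walk x k) \<noteq> walk x k" using step_walk_before_end assms by simp
  ultimately show ?thesis using k' by (cases "even k'") (auto simp: step_def)
qed

lemma walk_image_closed:
  assumes "v \<in> walk x ` {..walk_length}"
  shows "P v \<in> walk x ` {..walk_length} \<and> Q v \<in> walk x ` {..walk_length}"
proof -
  obtain k where k: "k \<le> walk_length" "v = walk x k" using assms by auto
  have forward: "step k v \<in> walk x ` {..walk_length}"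
  proof (cases "k < walk_length")
    case True
    then have "Suc k \<in> {..walk_length}" "step k v = walk x (Suc k)" using k by auto
    then show ?thesis by (metis image_eqI)
  next
    case False
    then show ?thesis using step_walk_end k by auto
  qed
  have backward: "step (Suc k) v \<in> walk x ` {..walk_length}"
  proof (cases k)
    case 0
    then have "step (Suc k) v = walk x 0" using k Q_fix by (simp add: step_def)
    then show ?thesis by force
  next
    case (Suc k')
    then have "step (Suc k) v = walk x k'"
      using step_walk_Suc[OF x_in, of k'] k by (simp add: step_def)
    then show ?thesis using Suc k by auto
  qed
  show ?thesis using forward backward by (cases "even k") (auto simp: step_def)
qed

lemma rtrancl_edges_walk_image: "(x, z) \<in> edges\<^sup>* \<Longrightarrow> z \<in> walk x ` {..walk_length}"
proof (induction rule: rtrancl_induct)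
  case base
  then show ?case by force
next
  case (step y z)
  then show ?case using walk_image_closed by (auto simp: edges_def)
qed

lemma walk_end_neq: "walk_end \<noteq> x"
proof
  assume "walk_end = x"
  then have "walk_length = 0" by (intro inj_onD[OF inj_on_walk_length]) auto
  then show False using walk_length_pos by simp
qed

lemma walk_end_fixed: "P walk_end = walk_end \<or> Q walk_end = walk_end"
  using step_walk_end by (auto simp: step_def split: if_splits)

lemma fixed_reachable_eq:
  assumes "(x, z) \<in> edges\<^sup>*" "P z = z \<or> Q z = z"
  shows "z = x \<or> z = walk_end"
proof -
  obtain k where k: "k \<le> walk_length" "z = walk x k"
    using rtrancl_edges_walk_image[OF assms(1)] by auto
  then show ?thesis using walk_interior_moved[of k] assms(2) by (cases "k = 0 \<or> k = walk_length") auto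
qed

text \<open>The colour c (even k) of the k-th point of the walk stays that of x in the interior
  of the walk and flips at its last step.\<close>

lemma walk_end_colour:
  fixes c :: "bool \<Rightarrow> 'v \<Rightarrow> bool"
  assumes c_P: "\<And>v. v \<in> V \<Longrightarrow> P v \<noteq> v \<Longrightarrow> c True (P v) \<noteq> c True v"
    and c_Q: "\<And>v. v \<in> V \<Longrightarrow> Q v \<noteq> v \<Longrightarrow> c False (Q v) \<noteq> c False v"
    and c_both: "\<And>v. v \<in> V \<Longrightarrow> P v \<noteq> v \<Longrightarrow> Q v \<noteq> v \<Longrightarrow> c True v \<noteq> c False v"
  shows "Q walk_end = walk_end \<Longrightarrow> P walk_end \<noteq> walk_end \<Longrightarrow> c True walk_end \<noteq> c True x"
    and "P walk_end = walk_end \<Longrightarrow> Q walk_end \<noteq> walk_end \<Longrightarrow> c False walk_end \<noteq> c True x"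
proof -
  have c_step: "\<And>k v. v \<in> V \<Longrightarrow> step k v \<noteq> v \<Longrightarrow> c (even k) (step k v) \<noteq> c (even k) v"
    using c_P c_Q by (auto simp: step_def)
  have flip: "c (even k) (walk x (Suc k)) \<noteq> c (even k) (walk x k)" if "k < walk_length" for k
    using c_step[OF walk_in[OF x_in], of k k] step_walk_before_end that by simp
  have interior: "k < walk_length \<Longrightarrow> c (even k) (walk x k) = c True x" for k
  proof (induction k)
    case (Suc k)
    have "P (walk x (Suc k)) \<noteq> walk x (Suc k) \<and> Q (walk x (Suc k)) \<noteq> walk x (Suc k)"
      using walk_interior_moved[of "Suc k"] Suc.prems by blast
    then have "c (even (Suc k)) (walk x (Suc k)) \<noteq> c (even k) (walk x (Suc k))"
      using c_both[OF walk_in[OF x_in, of "Suc k"]] by (cases "even k") auto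
    then show ?case using Suc flip[of k] by auto
  qed simp
  obtain k' where k': "walk_length = Suc k'" using walk_length_pos by (cases walk_length) auto
  have "c (even k') walk_end \<noteq> c True x" using flip[of k'] interior[of k'] k' by simp
  moreover have "step (Suc k') walk_end = walk_end" using step_walk_end k' by simp
  ultimately show "Q walk_end = walk_end \<Longrightarrow> P walk_end \<noteq> walk_end \<Longrightarrow> c True walk_end \<noteq> c True x"
    and "P walk_end = walk_end \<Longrightarrow> Q walk_end \<noteq> walk_end \<Longrightarrow> c False walk_end \<noteq> c True x"
    by (cases "even k'"; auto simp: step_def)+
qed

end

end

section \<open>Composition of Brauer diagrams\<close>

lemma pts_iff: "x \<in> pts n \<longleftrightarrow> snd x < n"
  by (cases x) (auto simp: pts_def)

lemma brauer_diagramD: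
  assumes "brauer_diagram n d"
  shows "x \<in> pts n \<Longrightarrow> d x \<in> pts n" and "x \<in> pts n \<Longrightarrow> d x \<noteq> x"
    and "x \<in> pts n \<Longrightarrow> d (d x) = x" and "x \<notin> pts n \<Longrightarrow> d x = x"
  using assms unfolding brauer_diagram_def by blast+

lemma lift_top_inj: "lift_top x = lift_top y \<longleftrightarrow> x = y"
  by (cases x; cases y) (auto simp: lift_top_def)

lemma lift_bot_inj: "lift_bot x = lift_bot y \<longleftrightarrow> x = y"
  by (cases x; cases y) (auto simp: lift_bot_def)

lemma outer_inj: "outer x = outer y \<longleftrightarrow> x = y"
  by (cases x; cases y) (auto simp: outer_def)

text \<open>The stacked picture of d1 over d2 has the vertices (l, k) with levels l \<le> 2.
  Its edges are the moves of two involutions: the upper one acts by d1 on levels 0 and 1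
  and the lower one by d2 on levels 1 and 2, each fixing the remaining level.\<close>

definition stack_vertices :: "nat \<Rightarrow> (nat \<times> nat) set" where
  "stack_vertices n = {..2} \<times> {..<n}"

definition upper_move :: "diagram \<Rightarrow> nat \<times> nat \<Rightarrow> nat \<times> nat" where
  "upper_move d1 v = (if fst v \<le> 1 then lift_top (d1 (fst v = 1, snd v)) else v)"

definition lower_move :: "diagram \<Rightarrow> nat \<times> nat \<Rightarrow> nat \<times> nat" where
  "lower_move d2 v = (if 1 \<le> fst v then lift_bot (d2 (fst v = 2, snd v)) else v)"

lemma outer_in_stack_vertices: "x \<in> pts n \<Longrightarrow> outer x \<in> stack_vertices n"
  by (cases x) (auto simp: outer_def stack_vertices_def pts_iff)

text \<open>The walk from an outer point x starts with the move of the diagram that contains x.\<close>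

definition first_move :: "diagram \<Rightarrow> diagram \<Rightarrow> pt \<Rightarrow> nat \<times> nat \<Rightarrow> nat \<times> nat" where
  "first_move d1 d2 x = (if fst x then lower_move d2 else upper_move d1)"

definition second_move :: "diagram \<Rightarrow> diagram \<Rightarrow> pt \<Rightarrow> nat \<times> nat \<Rightarrow> nat \<times> nat" where
  "second_move d1 d2 x = (if fst x then upper_move d1 else lower_move d2)"

context
  fixes n :: nat and d1 d2 :: diagram
  assumes b1: "brauer_diagram n d1" and b2: "brauer_diagram n d2"
begin

lemma involution_pair_stack: "involution_pair (stack_vertices n) (upper_move d1) (lower_move d2)"
proof
  fix v assume v: "v \<in> stack_vertices n"
  obtain l k where lk: "v = (l, k)" "l \<le> 2" "k < n" using v by (auto simp: stack_vertices_def)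
  show "upper_move d1 v \<in> stack_vertices n"
    using brauer_diagramD(1)[OF b1, of "(l = 1, k)"] lk
    by (auto simp: upper_move_def stack_vertices_def lift_top_def pts_iff split: prod.splits)
  show "lower_move d2 v \<in> stack_vertices n"
    using brauer_diagramD(1)[OF b2, of "(l = 2, k)"] lk
    by (auto simp: lower_move_def stack_vertices_def lift_bot_def pts_iff split: prod.splits)
  show "upper_move d1 (upper_move d1 v) = v"
  proof (cases "l \<le> 1")
    case True
    obtain b' k' where e: "d1 (l = 1, k) = (b', k')" by fastforce
    have "d1 (b', k') = (l = 1, k)" using brauer_diagramD(3)[OF b1, of "(l = 1, k)"] e lk
      by (simp add: pts_iff)
    then show ?thesis using True e lk by (auto simp: upper_move_def lift_top_def)
  qed (use lk in \<open>simp add: upper_move_def\<close>)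
  show "lower_move d2 (lower_move d2 v) = v"
  proof (cases "1 \<le> l")
    case True
    obtain b' k' where e: "d2 (l = 2, k) = (b', k')" by fastforce
    have "d2 (b', k') = (l = 2, k)" using brauer_diagramD(3)[OF b2, of "(l = 2, k)"] e lk
      by (simp add: pts_iff)
    then show ?thesis using True e lk by (auto simp: lower_move_def lift_bot_def)
  qed (use lk in \<open>simp add: lower_move_def\<close>)
qed (simp add: stack_vertices_def)

interpretation stack: involution_pair "stack_vertices n" "upper_move d1" "lower_move d2"
  by (rule involution_pair_stack)

lemma stack_edges_subset: "stack_edges n d1 d2 \<subseteq> stack.edges"
proof
  fix e assume "e \<in> stack_edges n d1 d2"
  then consider x where "x \<in> pts n" "e = (lift_top x, lift_top (d1 x))"
    | x where "x \<in> pts n" "e = (lift_bot x, lift_bot (d2 x))"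
    unfolding stack_edges_def by blast
  then show "e \<in> stack.edges"
  proof cases
    case 1
    then have "lift_top x \<in> stack_vertices n" "upper_move d1 (lift_top x) = lift_top (d1 x)"
      by (cases x; auto simp: lift_top_def stack_vertices_def pts_iff upper_move_def)+
    then show ?thesis using 1 unfolding stack.edges_def by force
  next
    case 2
    then have "lift_bot x \<in> stack_vertices n" "lower_move d2 (lift_bot x) = lift_bot (d2 x)"
      by (cases x; auto simp: lift_bot_def stack_vertices_def pts_iff lower_move_def)+
    then show ?thesis using 2 unfolding stack.edges_def by force
  qed
qed

lemma stack_graph_subset: "stack.edges \<subseteq> (stack_edges n d1 d2)\<^sup>="
proof
  fix e assume "e \<in> stack.edges"
  then consider v where "v \<in> stack_vertices n" "e = (v, upper_move d1 v)"
    | v where "v \<in> stack_vertices n" "e = (v, lower_move d2 v)"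
    unfolding stack.edges_def by blast
  then show "e \<in> (stack_edges n d1 d2)\<^sup>="
  proof cases
    case 1
    obtain l k where v: "v = (l, k)" "l \<le> 2" "(l = 1, k) \<in> pts n" "(l = 2, k) \<in> pts n"
      using 1 by (auto simp: stack_vertices_def pts_iff)
    show ?thesis
    proof (cases "l \<le> 1")
      case True
      then have "v = lift_top (l = 1, k)" "upper_move d1 v = lift_top (d1 (l = 1, k))"
        using v by (auto simp: lift_top_def upper_move_def)
      then show ?thesis using 1 v unfolding stack_edges_def by blast
    qed (use 1 v in \<open>simp add: upper_move_def\<close>)
  next
    case 2
    obtain l k where v: "v = (l, k)" "l \<le> 2" "(l = 1, k) \<in> pts n" "(l = 2, k) \<in> pts n"
      using 2 by (auto simp: stack_vertices_def pts_iff)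
    show ?thesis
    proof (cases "1 \<le> l")
      case True
      then have "v = lift_bot (l = 2, k)" "lower_move d2 v = lift_bot (d2 (l = 2, k))"
        using v by (auto simp: lift_bot_def lower_move_def)
      then show ?thesis using 2 v unfolding stack_edges_def by blast
    qed (use 2 v in \<open>simp add: lower_move_def\<close>)
  qed
qed

lemma stack_conn_eq: "stack_conn n d1 d2 = stack.edges\<^sup>*"
proof -
  have "stack.edges\<^sup>* \<subseteq> (stack_edges n d1 d2)\<^sup>*"
    using rtrancl_mono[OF stack_graph_subset] by simp
  then show ?thesis unfolding stack_conn_def using rtrancl_mono[OF stack_edges_subset] by blast
qed

lemma stack_conn_sym: "(u, v) \<in> stack_conn n d1 d2 \<Longrightarrow> (v, u) \<in> stack_conn n d1 d2"
  unfolding stack_conn_eq by (rule stack.rtrancl_edges_sym)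

lemma fixed_stack_vertex_outer:
  assumes v: "v \<in> stack_vertices n" and fixed: "upper_move d1 v = v \<or> lower_move d2 v = v"
  shows "\<exists>y\<in>pts n. v = outer y"
proof -
  obtain l k where lk: "v = (l, k)" "l \<le> 2" "k < n" using v by (auto simp: stack_vertices_def)
  have "l \<noteq> 1"
  proof
    assume l: "l = 1"
    have "upper_move d1 v \<noteq> v"
      using brauer_diagramD(2)[OF b1, of "(True, k)"] lk l lift_top_inj[of "d1 (True, k)" "(True, k)"]
      by (auto simp: upper_move_def lift_top_def pts_iff)
    moreover have "lower_move d2 v \<noteq> v"
      using brauer_diagramD(2)[OF b2, of "(False, k)"] lk l lift_bot_inj[of "d2 (False, k)" "(False, k)"]
      by (auto simp: lower_move_def lift_bot_def pts_iff)
    ultimately show False using fixed by simp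
  qed
  then have "v = outer (l = 2, k)" "(l = 2, k) \<in> pts n" using lk by (auto simp: outer_def pts_iff)
  then show ?thesis by blast
qed

lemma outer_fixed_moved:
  assumes x: "x \<in> pts n"
  shows "\<not> fst x \<Longrightarrow> lower_move d2 (outer x) = outer x \<and> upper_move d1 (outer x) \<noteq> outer x"
    and "fst x \<Longrightarrow> upper_move d1 (outer x) = outer x \<and> lower_move d2 (outer x) \<noteq> outer x"
  using brauer_diagramD(2)[OF b1 x] brauer_diagramD(2)[OF b2 x]
    lift_top_inj[of "d1 x" x] lift_bot_inj[of "d2 x" x]
  by (cases x; auto simp: upper_move_def lower_move_def outer_def lift_top_def lift_bot_def)+

lemma involution_pair_from:
  "involution_pair (stack_vertices n) (first_move d1 d2 x) (second_move d1 d2 x)"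
  "involution_pair.edges (stack_vertices n) (first_move d1 d2 x) (second_move d1 d2 x) = stack.edges"
  by (simp_all add: first_move_def second_move_def stack.swap stack.edges_swap
      involution_pair_stack)

lemma walk_start:
  assumes x: "x \<in> pts n"
  shows "outer x \<in> stack_vertices n" "second_move d1 d2 x (outer x) = outer x"
    "first_move d1 d2 x (outer x) \<noteq> outer x"
  using outer_in_stack_vertices[OF x] outer_fixed_moved[OF x]
  by (cases "fst x"; simp add: first_move_def second_move_def)+

lemma outer_partner:
  assumes x: "x \<in> pts n"
  defines "z \<equiv> involution_pair.walk_end (first_move d1 d2 x) (second_move d1 d2 x) (outer x)"
  shows "\<exists>y\<in>pts n. outer y = z \<and>
    (\<forall>y'. y' \<in> pts n \<and> y' \<noteq> x \<and> (outer x, outer y') \<in> stack_conn n d1 d2 \<longleftrightarrow> y' = y)"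
proof -
  interpret W: involution_pair "stack_vertices n" "first_move d1 d2 x" "second_move d1 d2 x"
    by (rule involution_pair_from)
  note start = walk_start[OF x]
  have conn: "stack_conn n d1 d2 = W.edges\<^sup>*"
    by (simp add: stack_conn_eq involution_pair_from(2))
  have fixed_iff: "first_move d1 d2 x v = v \<or> second_move d1 d2 x v = v \<longleftrightarrow>
      upper_move d1 v = v \<or> lower_move d2 v = v" for v
    by (auto simp: first_move_def second_move_def)
  have z: "z \<in> stack_vertices n" "z \<noteq> outer x" "(outer x, z) \<in> W.edges\<^sup>*"
      "first_move d1 d2 x z = z \<or> second_move d1 d2 x z = z"
    unfolding z_def using W.walk_in W.walk_end_neq W.walk_in_rtrancl_edges W.walk_end_fixed start
    by auto
  obtain y where y: "y \<in> pts n" "outer y = z"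
    using fixed_stack_vertex_outer[OF z(1)] z(4) fixed_iff by metis
  have "y' \<in> pts n \<and> y' \<noteq> x \<and> (outer x, outer y') \<in> stack_conn n d1 d2 \<longleftrightarrow> y' = y" for y'
  proof
    assume y': "y' \<in> pts n \<and> y' \<noteq> x \<and> (outer x, outer y') \<in> stack_conn n d1 d2"
    have "upper_move d1 (outer y') = outer y' \<or> lower_move d2 (outer y') = outer y'"
      using outer_fixed_moved[of y'] y' by (cases "fst y'") auto
    then have "outer y' = outer x \<or> outer y' = z"
      using W.fixed_reachable_eq[OF start, of "outer y'"] y' conn fixed_iff z_def by auto
    then show "y' = y" using y' y outer_inj by metis
  qed (use y z conn outer_inj in auto)
  then show ?thesis using y by blast
qed

lemma compose_partner:
  assumes x: "x \<in> pts n"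
  shows "compose n d1 d2 x \<in> pts n \<and> compose n d1 d2 x \<noteq> x \<and>
         (outer x, outer (compose n d1 d2 x)) \<in> stack_conn n d1 d2"
proof -
  have "\<exists>!y. y \<in> pts n \<and> y \<noteq> x \<and> (outer x, outer y) \<in> stack_conn n d1 d2"
    using outer_partner[OF x] by metis
  from theI'[OF this] show ?thesis using x unfolding Defs.compose_def by simp
qed

lemma compose_eqI:
  assumes "x \<in> pts n" "y \<in> pts n" "y \<noteq> x" "(outer x, outer y) \<in> stack_conn n d1 d2"
  shows "compose n d1 d2 x = y"
  using outer_partner[OF assms(1)] compose_partner[OF assms(1)] assms by metis

lemma outer_compose:
  assumes x: "x \<in> pts n"
  shows "outer (compose n d1 d2 x) =
    involution_pair.walk_end (first_move d1 d2 x) (second_move d1 d2 x) (outer x)"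
  using outer_partner[OF x] compose_partner[OF x] by metis

lemma brauer_compose: "brauer_diagram n (compose n d1 d2)"
  unfolding brauer_diagram_def
proof (intro conjI ballI allI impI)
  fix x assume x: "x \<in> pts n"
  then show "compose n d1 d2 x \<in> pts n" "compose n d1 d2 x \<noteq> x" using compose_partner by auto
  show "compose n d1 d2 (compose n d1 d2 x) = x"
    using compose_partner[OF x] by (intro compose_eqI) (auto intro: stack_conn_sym x)
qed (simp add: Defs.compose_def)

end

section \<open>Walled diagrams are closed under composition\<close>

text \<open>Both walled conditions say that every edge joins points of different colour,
  the colour of a point being whether its side of the wall matches its row.\<close>

definition wall_colour :: "nat \<Rightarrow> pt \<Rightarrow> bool" where
  "wall_colour r x \<longleftrightarrow> (left_of_wall r x \<longleftrightarrow> fst x)"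

lemma walled_diagram_iff_colour:
  "walled_diagram r s d \<longleftrightarrow>
     brauer_diagram (r + s) d \<and> (\<forall>x\<in>pts (r + s). wall_colour r (d x) \<noteq> wall_colour r x)"
  unfolding walled_diagram_def wall_colour_def by blast

lemma walled_diagram_brauer: "walled_diagram r s d \<Longrightarrow> brauer_diagram (r + s) d"
  by (simp add: walled_diagram_def)

text \<open>The colour of a stack vertex as a point of the upper (b) or lower (\<not> b) diagram.\<close>

definition level_colour :: "nat \<Rightarrow> bool \<Rightarrow> nat \<times> nat \<Rightarrow> bool" where
  "level_colour r b v = wall_colour r (fst v = (if b then 1 else 2), snd v)"

lemma level_colour_upper_move:
  assumes "walled_diagram r s d1" "v \<in> stack_vertices (r + s)" "upper_move d1 v \<noteq> v"
  shows "level_colour r True (upper_move d1 v) \<noteq> level_colour r True v"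
proof -
  obtain l k where v: "v = (l, k)" by fastforce
  then have "l \<le> 1" "(l = 1, k) \<in> pts (r + s)"
    using assms(2,3) by (auto simp: stack_vertices_def upper_move_def pts_iff split: if_splits)
  moreover from this(2) have "wall_colour r (d1 (l = 1, k)) \<noteq> wall_colour r (l = 1, k)"
    using assms(1) by (simp add: walled_diagram_iff_colour)
  ultimately show ?thesis using v
    by (cases "d1 (l = 1, k)") (auto simp: level_colour_def upper_move_def lift_top_def)
qed

lemma level_colour_lower_move:
  assumes "walled_diagram r s d2" "v \<in> stack_vertices (r + s)" "lower_move d2 v \<noteq> v"
  shows "level_colour r False (lower_move d2 v) \<noteq> level_colour r False v"
proof -
  obtain l k where v: "v = (l, k)" by fastforce
  then have "1 \<le> l" "l \<le> 2" "(l = 2, k) \<in> pts (r + s)"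
    using assms(2,3) by (auto simp: stack_vertices_def lower_move_def pts_iff split: if_splits)
  moreover from this(3) have "wall_colour r (d2 (l = 2, k)) \<noteq> wall_colour r (l = 2, k)"
    using assms(1) by (simp add: walled_diagram_iff_colour)
  ultimately show ?thesis using v
    by (cases "d2 (l = 2, k)") (auto simp: level_colour_def lower_move_def lift_bot_def)
qed

lemma level_colour_middle:
  "upper_move d1 v \<noteq> v \<Longrightarrow> lower_move d2 v \<noteq> v \<Longrightarrow> level_colour r True v \<noteq> level_colour r False v"
  by (cases v) (auto simp: level_colour_def wall_colour_def left_of_wall_def
      upper_move_def lower_move_def split: if_splits)

lemma walled_compose:
  assumes w1: "walled_diagram r s d1" and w2: "walled_diagram r s d2"
  shows "walled_diagram r s (compose (r + s) d1 d2)"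
  unfolding walled_diagram_iff_colour
proof (intro conjI ballI)
  have b1: "brauer_diagram (r + s) d1" and b2: "brauer_diagram (r + s) d2"
    using w1 w2 by (simp_all add: walled_diagram_brauer)
  show "brauer_diagram (r + s) (compose (r + s) d1 d2)" by (rule brauer_compose[OF b1 b2])
  fix x assume x: "x \<in> pts (r + s)"
  interpret W: involution_pair "stack_vertices (r + s)" "first_move d1 d2 x" "second_move d1 d2 x"
    by (rule involution_pair_from[OF b1 b2])
  define c where "c b = level_colour r (b \<noteq> fst x)" for b
  define y where "y = compose (r + s) d1 d2 x"
  note start = walk_start[OF b1 b2 x]
  note colours = level_colour_upper_move[OF w1] level_colour_lower_move[OF w2] level_colour_middle
  have ends: "W.walk_end (outer x) = outer y"
    using outer_compose[OF b1 b2 x] by (simp add: y_def)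
  have y: "y \<in> pts (r + s)" using compose_partner[OF b1 b2 x] by (simp add: y_def)
  have "c True (outer x) = wall_colour r x"
    by (cases x) (auto simp: c_def level_colour_def outer_def)
  moreover have "c True (outer y) \<noteq> c True (outer x)"
    if "second_move d1 d2 x (outer y) = outer y" "first_move d1 d2 x (outer y) \<noteq> outer y"
    using W.walk_end_colour(1)[OF start, of c] colours that ends
    by (cases "fst x") (auto simp: c_def first_move_def second_move_def)
  moreover have "c False (outer y) \<noteq> c True (outer x)"
    if "first_move d1 d2 x (outer y) = outer y" "second_move d1 d2 x (outer y) \<noteq> outer y"
    using W.walk_end_colour(2)[OF start, of c] colours that ends
    by (cases "fst x") (auto simp: c_def first_move_def second_move_def)
  moreover obtain a k a' k' where "x = (a, k)" "y = (a', k')" by fastforce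
  ultimately have "wall_colour r y \<noteq> wall_colour r x"
    using outer_fixed_moved[OF b1 b2 y]
    by (cases a; cases a') (auto simp: c_def level_colour_def outer_def first_move_def second_move_def)
  then show "wall_colour r (compose (r + s) d1 d2 x) \<noteq> wall_colour r x"
    by (simp add: y_def)
qed

section \<open>The action of diagrams on labellings\<close>

text \<open>A diagram d on n strands acts on the n-th tensor power of an N-dimensional space:
  its matrix entry at the basis vectors given by labellings I (top) and J (bottom) of the
  strands by {..<N} is 1 if the labels are constant along each edge of d and 0 otherwise.
  Composing diagrams multiplies the matrices up to a factor N per closed loop, and for
  N \<ge> 2n the action is faithful; this yields associativity of composition together with
  the additivity of the loop count.\<close>

definition boundary_label :: "(nat \<Rightarrow> nat) \<Rightarrow> (nat \<Rightarrow> nat) \<Rightarrow> pt \<Rightarrow> nat" where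
  "boundary_label I J x = (if fst x then J (snd x) else I (snd x))"

definition edge_constant :: "nat \<Rightarrow> diagram \<Rightarrow> (pt \<Rightarrow> nat) \<Rightarrow> bool" where
  "edge_constant n d L \<longleftrightarrow> (\<forall>x\<in>pts n. L (d x) = L x)"

definition tmat :: "nat \<Rightarrow> diagram \<Rightarrow> (nat \<Rightarrow> nat) \<Rightarrow> (nat \<Rightarrow> nat) \<Rightarrow> nat" where
  "tmat n d I J = (if edge_constant n d (boundary_label I J) then 1 else 0)"

definition labellings :: "nat \<Rightarrow> nat \<Rightarrow> (nat \<Rightarrow> nat) set" where
  "labellings N n = {..<n} \<rightarrow>\<^sub>E {..<N}"

definition label_bounded :: "nat \<Rightarrow> nat \<Rightarrow> (nat \<Rightarrow> nat) \<Rightarrow> bool" where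
  "label_bounded N n I \<longleftrightarrow> (\<forall>k<n. I k < N)"

definition stack_label :: "(nat \<Rightarrow> nat) \<Rightarrow> (nat \<Rightarrow> nat) \<Rightarrow> (nat \<Rightarrow> nat) \<Rightarrow> nat \<times> nat \<Rightarrow> nat" where
  "stack_label I J K v = (if fst v = 0 then I (snd v) else if fst v = 1 then J (snd v) else K (snd v))"

lemma finite_labellings: "finite (labellings N n)"
  by (simp add: labellings_def finite_PiE)

lemma labellings_bounded: "J \<in> labellings N n \<Longrightarrow> label_bounded N n J"
  by (auto simp: labellings_def label_bounded_def)

lemma labellings_eq_iff: "I \<in> labellings N n \<Longrightarrow> J \<in> labellings N n \<Longrightarrow> I = J \<longleftrightarrow> (\<forall>k<n. I k = J k)"
  unfolding labellings_def by (auto simp: PiE_def extensional_def fun_eq_iff) (metis not_less)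

lemma stack_label_lift_top: "stack_label I J K (lift_top x) = boundary_label I J x"
  by (cases x) (auto simp: stack_label_def lift_top_def boundary_label_def)

lemma stack_label_lift_bot: "stack_label I J K (lift_bot x) = boundary_label J K x"
  by (cases x) (auto simp: stack_label_def lift_bot_def boundary_label_def)

lemma stack_label_outer: "stack_label I J K (outer x) = boundary_label I K x"
  by (cases x) (auto simp: stack_label_def outer_def boundary_label_def)

lemma tmat_cong:
  assumes "brauer_diagram n d" "\<And>k. k < n \<Longrightarrow> I k = I' k" "\<And>k. k < n \<Longrightarrow> J k = J' k"
  shows "tmat n d I J = tmat n d I' J'"
proof -
  have "boundary_label I J x = boundary_label I' J' x" if "x \<in> pts n" for x
    using that assms(2,3) by (auto simp: boundary_label_def pts_iff)
  then show ?thesis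
    using brauer_diagramD(1)[OF assms(1)] by (simp add: tmat_def edge_constant_def)
qed

definition stack_class :: "nat \<Rightarrow> diagram \<Rightarrow> diagram \<Rightarrow> nat \<times> nat \<Rightarrow> (nat \<times> nat) set" where
  "stack_class n d1 d2 v = stack_conn n d1 d2 `` {v}"

definition loop_classes :: "nat \<Rightarrow> diagram \<Rightarrow> diagram \<Rightarrow> (nat \<times> nat) set set" where
  "loop_classes n d1 d2 =
     {stack_class n d1 d2 (1, i) | i. i < n \<and> stack_class n d1 d2 (1, i) \<subseteq> {1} \<times> UNIV}"

lemma loops_eq_card: "loops n d1 d2 = card (loop_classes n d1 d2)"
  by (simp add: loops_def loop_classes_def stack_class_def)

lemma finite_loop_classes: "finite (loop_classes n d1 d2)"
proof -
  have "loop_classes n d1 d2 \<subseteq> (\<lambda>i. stack_class n d1 d2 (1, i)) ` {..<n}"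
    unfolding loop_classes_def by auto
  then show ?thesis by (rule finite_subset) simp
qed

definition loop_rep :: "nat \<Rightarrow> diagram \<Rightarrow> diagram \<Rightarrow> (nat \<times> nat) set \<Rightarrow> nat" where
  "loop_rep n d1 d2 C = (SOME i. i < n \<and> stack_class n d1 d2 (1, i) = C)"

lemma loop_rep:
  "C \<in> loop_classes n d1 d2 \<Longrightarrow> loop_rep n d1 d2 C < n \<and> stack_class n d1 d2 (1, loop_rep n d1 d2 C) = C"
  unfolding loop_rep_def loop_classes_def by (rule someI_ex) blast

definition consistent_middles ::
    "nat \<Rightarrow> nat \<Rightarrow> diagram \<Rightarrow> diagram \<Rightarrow> (nat \<Rightarrow> nat) \<Rightarrow> (nat \<Rightarrow> nat) \<Rightarrow> (nat \<Rightarrow> nat) set" where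
  "consistent_middles N n d1 d2 I K = {J \<in> labellings N n.
     \<forall>(u, v)\<in>stack_conn n d1 d2. stack_label I J K u = stack_label I J K v}"

text \<open>Outside the loops, a consistent middle labelling is forced by the boundary labels.\<close>

definition forced_label :: "nat \<Rightarrow> (nat \<Rightarrow> nat) \<Rightarrow> (nat \<Rightarrow> nat) \<Rightarrow> (nat \<times> nat) set \<Rightarrow> nat" where
  "forced_label n I K C = boundary_label I K (SOME y. y \<in> pts n \<and> outer y \<in> C)"

definition loop_values :: "nat \<Rightarrow> diagram \<Rightarrow> diagram \<Rightarrow> (nat \<Rightarrow> nat) \<Rightarrow> (nat \<times> nat) set \<Rightarrow> nat" where
  "loop_values n d1 d2 J = restrict (\<lambda>C. J (loop_rep n d1 d2 C)) (loop_classes n d1 d2)"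

definition class_value ::
    "nat \<Rightarrow> diagram \<Rightarrow> diagram \<Rightarrow> (nat \<Rightarrow> nat) \<Rightarrow> (nat \<Rightarrow> nat) \<Rightarrow> ((nat \<times> nat) set \<Rightarrow> nat) \<Rightarrow>
      (nat \<times> nat) set \<Rightarrow> nat" where
  "class_value n d1 d2 I K g C = (if C \<in> loop_classes n d1 d2 then g C else forced_label n I K C)"

definition middle_from ::
    "nat \<Rightarrow> diagram \<Rightarrow> diagram \<Rightarrow> (nat \<Rightarrow> nat) \<Rightarrow> (nat \<Rightarrow> nat) \<Rightarrow> ((nat \<times> nat) set \<Rightarrow> nat) \<Rightarrow> nat \<Rightarrow> nat" where
  "middle_from n d1 d2 I K g = restrict (\<lambda>i. class_value n d1 d2 I K g (stack_class n d1 d2 (1, i))) {..<n}"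

lemma constant_on_rtrancl:
  assumes "\<forall>(u, v)\<in>E. f u = f v" "(u, v) \<in> E\<^sup>*"
  shows "f u = f v"
  using assms(2,1) by (induction rule: rtrancl_induct) auto

lemma sum_tmat_eq_card:
  "(\<Sum>J\<in>labellings N n. tmat n d1 I J * tmat n d2 J K) = card (consistent_middles N n d1 d2 I K)"
proof -
  have edges: "(\<forall>(u, v)\<in>stack_edges n d1 d2. P u v) \<longleftrightarrow>
      (\<forall>x\<in>pts n. P (lift_top x) (lift_top (d1 x))) \<and> (\<forall>x\<in>pts n. P (lift_bot x) (lift_bot (d2 x)))" for P
    unfolding stack_edges_def by blast
  have "(\<forall>(u, v)\<in>stack_edges n d1 d2. stack_label I J K u = stack_label I J K v) \<longleftrightarrow>
      edge_constant n d1 (boundary_label I J) \<and> edge_constant n d2 (boundary_label J K)" for J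
    unfolding edges edge_constant_def stack_label_lift_top stack_label_lift_bot by (auto simp: eq_commute)
  then have "tmat n d1 I J * tmat n d2 J K =
      (if \<forall>(u, v)\<in>stack_edges n d1 d2. stack_label I J K u = stack_label I J K v then 1 else 0)" for J
    by (simp add: tmat_def)
  moreover have "(\<forall>(u, v)\<in>stack_edges n d1 d2. stack_label I J K u = stack_label I J K v) \<longleftrightarrow>
      (\<forall>(u, v)\<in>stack_conn n d1 d2. stack_label I J K u = stack_label I J K v)" for J
  proof
    assume "\<forall>(u, v)\<in>stack_edges n d1 d2. stack_label I J K u = stack_label I J K v"
    from constant_on_rtrancl[OF this]
    show "\<forall>(u, v)\<in>stack_conn n d1 d2. stack_label I J K u = stack_label I J K v"
      unfolding stack_conn_def by blast
  next
    have "stack_edges n d1 d2 \<subseteq> stack_conn n d1 d2" unfolding stack_conn_def by auto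
    then show "\<forall>(u, v)\<in>stack_conn n d1 d2. stack_label I J K u = stack_label I J K v \<Longrightarrow>
        \<forall>(u, v)\<in>stack_edges n d1 d2. stack_label I J K u = stack_label I J K v" by blast
  qed
  ultimately have "(\<Sum>J\<in>labellings N n. tmat n d1 I J * tmat n d2 J K) =
      (\<Sum>J\<in>labellings N n. if J \<in> consistent_middles N n d1 d2 I K then 1 else 0)"
    by (intro sum.cong) (auto simp: consistent_middles_def)
  also have "\<dots> = card (consistent_middles N n d1 d2 I K)"
    by (simp add: consistent_middles_def sum.inter_filter[symmetric] finite_labellings)
  finally show ?thesis .
qed

context
  fixes n :: nat and d1 d2 :: diagram
  assumes b1: "brauer_diagram n d1" and b2: "brauer_diagram n d2"
begin

interpretation stack: involution_pair "stack_vertices n" "upper_move d1" "lower_move d2"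
  by (rule involution_pair_stack[OF b1 b2])

lemma stack_class_eq:
  assumes "(u, v) \<in> stack_conn n d1 d2"
  shows "stack_class n d1 d2 u = stack_class n d1 d2 v"
proof -
  have "(v, u) \<in> stack_conn n d1 d2" using stack_conn_sym[OF b1 b2 assms] .
  then show ?thesis
    using assms unfolding stack_class_def stack_conn_def by (blast intro: rtrancl_trans)
qed

lemma in_stack_class: "v \<in> stack_class n d1 d2 v"
  by (simp add: stack_class_def stack_conn_def)

lemma stack_class_subset: "v \<in> stack_vertices n \<Longrightarrow> stack_class n d1 d2 v \<subseteq> stack_vertices n"
  unfolding stack_class_def stack_conn_eq[OF b1 b2] using stack.rtrancl_edges_in by blast

lemma consistent_middles_empty:
  assumes "\<not> edge_constant n (compose n d1 d2) (boundary_label I K)"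
  shows "consistent_middles N n d1 d2 I K = {}"
proof -
  obtain x where x: "x \<in> pts n" "boundary_label I K (compose n d1 d2 x) \<noteq> boundary_label I K x"
    using assms unfolding edge_constant_def by blast
  have "(outer x, outer (compose n d1 d2 x)) \<in> stack_conn n d1 d2"
    using compose_partner[OF b1 b2 x(1)] by simp
  then have "stack_label I J K (outer x) = stack_label I J K (outer (compose n d1 d2 x))"
    if "J \<in> consistent_middles N n d1 d2 I K" for J
    using that by (auto simp: consistent_middles_def)
  then show ?thesis using x(2) by (auto simp: stack_label_outer)
qed

lemma middle_class_outer:
  assumes "i < n" "stack_class n d1 d2 (1, i) \<notin> loop_classes n d1 d2"
  shows "\<exists>y\<in>pts n. outer y \<in> stack_class n d1 d2 (1, i)"
proof -
  obtain w where w: "w \<in> stack_class n d1 d2 (1, i)" "fst w \<noteq> 1"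
    using assms unfolding loop_classes_def by fastforce
  have "w \<in> stack_vertices n"
    using stack_class_subset[of "(1, i)"] w(1) assms(1) by (auto simp: stack_vertices_def)
  then obtain l k where "w = (l, k)" "w = outer (l = 2, k)" "(l = 2, k) \<in> pts n"
    using w(2) by (cases w) (auto simp: stack_vertices_def outer_def pts_iff)
  then show ?thesis using w(1) by metis
qed

context
  fixes N :: nat and I K :: "nat \<Rightarrow> nat"
  assumes bounded_I: "label_bounded N n I" and bounded_K: "label_bounded N n K"
    and constant_IK: "edge_constant n (compose n d1 d2) (boundary_label I K)"
begin

lemma outer_labels_agree:
  assumes y: "y1 \<in> pts n" "y2 \<in> pts n" "(outer y1, outer y2) \<in> stack_conn n d1 d2"
  shows "boundary_label I K y1 = boundary_label I K y2"
proof (cases "y2 = y1")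
  case False
  then have "compose n d1 d2 y1 = y2" using compose_eqI[OF b1 b2 y(1,2)] y(3) by simp
  then show ?thesis using constant_IK y(1) unfolding edge_constant_def by metis
qed simp

lemma consistent_middle_forced:
  assumes J: "J \<in> consistent_middles N n d1 d2 I K" and i: "i < n"
    and C: "stack_class n d1 d2 (1, i) \<notin> loop_classes n d1 d2"
  shows "J i = forced_label n I K (stack_class n d1 d2 (1, i))"
proof -
  define y where "y = (SOME y. y \<in> pts n \<and> outer y \<in> stack_class n d1 d2 (1, i))"
  have "\<exists>y. y \<in> pts n \<and> outer y \<in> stack_class n d1 d2 (1, i)"
    using middle_class_outer[OF i C] by blast
  from someI_ex[OF this] have y: "((1, i), outer y) \<in> stack_conn n d1 d2"
    unfolding y_def stack_class_def by auto
  have "J i = stack_label I J K (1, i)" by (simp add: stack_label_def)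
  also have "\<dots> = stack_label I J K (outer y)" using J y by (auto simp: consistent_middles_def)
  also have "\<dots> = forced_label n I K (stack_class n d1 d2 (1, i))"
    by (simp add: stack_label_outer forced_label_def y_def)
  finally show ?thesis .
qed

lemma consistent_middle_loop:
  assumes J: "J \<in> consistent_middles N n d1 d2 I K" and i: "i < n"
    and C: "stack_class n d1 d2 (1, i) \<in> loop_classes n d1 d2"
  shows "J i = loop_values n d1 d2 J (stack_class n d1 d2 (1, i))"
proof -
  define j where "j = loop_rep n d1 d2 (stack_class n d1 d2 (1, i))"
  have "((1, i), (1, j)) \<in> stack_conn n d1 d2"
    using loop_rep[OF C] in_stack_class[of "(1, j)"] unfolding j_def stack_class_def by auto
  then have "J i = J j" using J by (force simp: consistent_middles_def stack_label_def)
  then show ?thesis using C by (simp add: loop_values_def j_def)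
qed

lemma inj_on_loop_values: "inj_on (loop_values n d1 d2) (consistent_middles N n d1 d2 I K)"
proof (rule inj_onI)
  fix J J' assume J: "J \<in> consistent_middles N n d1 d2 I K" and J': "J' \<in> consistent_middles N n d1 d2 I K"
    and eq: "loop_values n d1 d2 J = loop_values n d1 d2 J'"
  have "J i = J' i" if "i < n" for i
    using consistent_middle_forced[OF J that] consistent_middle_forced[OF J' that]
      consistent_middle_loop[OF J that] consistent_middle_loop[OF J' that] eq by metis
  moreover have "J \<in> labellings N n" "J' \<in> labellings N n"
    using J J' by (auto simp: consistent_middles_def)
  ultimately show "J = J'" using labellings_eq_iff by blast
qed

lemma middle_from_labellings:
  assumes g: "g \<in> loop_classes n d1 d2 \<rightarrow>\<^sub>E {..<N}"
  shows "middle_from n d1 d2 I K g \<in> labellings N n"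
proof -
  have "class_value n d1 d2 I K g (stack_class n d1 d2 (1, i)) < N" if i: "i < n" for i
  proof (cases "stack_class n d1 d2 (1, i) \<in> loop_classes n d1 d2")
    case True
    then show ?thesis using g by (auto simp: class_value_def)
  next
    case False
    then have "\<exists>y. y \<in> pts n \<and> outer y \<in> stack_class n d1 d2 (1, i)"
      using middle_class_outer[OF i] by blast
    from someI_ex[OF this] show ?thesis
      using False bounded_I bounded_K
      by (auto simp: class_value_def forced_label_def boundary_label_def label_bounded_def pts_iff)
  qed
  then show ?thesis by (simp add: labellings_def middle_from_def)
qed

lemma stack_label_middle_from:
  assumes u: "u \<in> stack_vertices n"
  shows "stack_label I (middle_from n d1 d2 I K g) K u = class_value n d1 d2 I K g (stack_class n d1 d2 u)"
proof (cases "fst u = 1")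
  case True
  then show ?thesis using u by (cases u) (auto simp: stack_label_def middle_from_def stack_vertices_def)
next
  case False
  obtain l k where "u = (l, k)" by fastforce
  define y0 where "y0 = (l = 2, k)"
  have y0: "u = outer y0" "y0 \<in> pts n"
    using u False \<open>u = (l, k)\<close> by (auto simp: y0_def stack_vertices_def outer_def pts_iff)
  have not_loop: "stack_class n d1 d2 u \<notin> loop_classes n d1 d2"
    using in_stack_class[of u] False by (auto simp: loop_classes_def)
  have "\<exists>y. y \<in> pts n \<and> outer y \<in> stack_class n d1 d2 u" using y0 in_stack_class by blast
  from someI_ex[OF this] have "boundary_label I K y0 = forced_label n I K (stack_class n d1 d2 u)"
    using outer_labels_agree y0 unfolding forced_label_def stack_class_def by auto
  then show ?thesis using not_loop y0 by (simp add: class_value_def stack_label_outer)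
qed

lemma middle_from_consistent:
  assumes g: "g \<in> loop_classes n d1 d2 \<rightarrow>\<^sub>E {..<N}"
  shows "middle_from n d1 d2 I K g \<in> consistent_middles N n d1 d2 I K"
proof -
  have "stack_label I (middle_from n d1 d2 I K g) K u = stack_label I (middle_from n d1 d2 I K g) K v"
    if uv: "(u, v) \<in> stack_conn n d1 d2" for u v
  proof (cases "u \<in> stack_vertices n")
    case True
    then have "v \<in> stack_vertices n"
      using uv stack.rtrancl_edges_in by (simp add: stack_conn_eq[OF b1 b2])
    then show ?thesis using stack_label_middle_from True stack_class_eq[OF uv] by simp
  next
    case False
    then have "v = u"
      using uv stack.rtrancl_edges_outside by (simp add: stack_conn_eq[OF b1 b2])
    then show ?thesis by simp
  qed
  then show ?thesis using middle_from_labellings[OF g] by (auto simp: consistent_middles_def)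
qed

lemma loop_values_middle_from:
  assumes g: "g \<in> loop_classes n d1 d2 \<rightarrow>\<^sub>E {..<N}"
  shows "loop_values n d1 d2 (middle_from n d1 d2 I K g) = g"
proof
  fix C
  show "loop_values n d1 d2 (middle_from n d1 d2 I K g) C = g C"
    using loop_rep[of C n d1 d2] g
    by (auto simp: loop_values_def middle_from_def class_value_def PiE_def extensional_def)
qed

lemma card_consistent_middles: "card (consistent_middles N n d1 d2 I K) = N ^ loops n d1 d2"
proof -
  have "loop_values n d1 d2 ` consistent_middles N n d1 d2 I K \<subseteq> loop_classes n d1 d2 \<rightarrow>\<^sub>E {..<N}"
  proof clarify
    fix J assume J: "J \<in> consistent_middles N n d1 d2 I K"
    then have "\<forall>k<n. J k < N" by (auto simp: consistent_middles_def labellings_def)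
    then show "loop_values n d1 d2 J \<in> loop_classes n d1 d2 \<rightarrow>\<^sub>E {..<N}"
      using loop_rep by (auto simp: loop_values_def)
  qed
  moreover have "loop_classes n d1 d2 \<rightarrow>\<^sub>E {..<N} \<subseteq> loop_values n d1 d2 ` consistent_middles N n d1 d2 I K"
  proof
    fix g assume g: "g \<in> loop_classes n d1 d2 \<rightarrow>\<^sub>E {..<N}"
    show "g \<in> loop_values n d1 d2 ` consistent_middles N n d1 d2 I K"
      using loop_values_middle_from[OF g, symmetric] middle_from_consistent[OF g] by (rule image_eqI)
  qed
  ultimately have "bij_betw (loop_values n d1 d2) (consistent_middles N n d1 d2 I K)
      (loop_classes n d1 d2 \<rightarrow>\<^sub>E {..<N})"
    using inj_on_loop_values unfolding bij_betw_def by blast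
  then show ?thesis
    by (simp add: bij_betw_same_card card_PiE finite_loop_classes loops_eq_card)
qed

end

lemma sum_tmat_compose:
  assumes "label_bounded N n I" "label_bounded N n K"
  shows "(\<Sum>J\<in>labellings N n. tmat n d1 I J * tmat n d2 J K) = N ^ loops n d1 d2 * tmat n (compose n d1 d2) I K"
  unfolding sum_tmat_eq_card using card_consistent_middles[OF assms] consistent_middles_empty[of I K N]
  by (cases "edge_constant n (compose n d1 d2) (boundary_label I K)") (simp_all add: tmat_def)

end

text \<open>Faithfulness: labelling each edge of d by the smaller of the indices of its two ends
  gives a matrix entry of d that is 1, and that determines d among all diagrams.\<close>

definition point_index :: "nat \<Rightarrow> pt \<Rightarrow> nat" where
  "point_index n x = (if fst x then n + snd x else snd x)"

definition edge_label :: "nat \<Rightarrow> diagram \<Rightarrow> pt \<Rightarrow> nat" where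
  "edge_label n d x = min (point_index n x) (point_index n (d x))"

definition edge_label_top :: "nat \<Rightarrow> diagram \<Rightarrow> nat \<Rightarrow> nat" where
  "edge_label_top n d = restrict (\<lambda>k. edge_label n d (False, k)) {..<n}"

definition edge_label_bot :: "nat \<Rightarrow> diagram \<Rightarrow> nat \<Rightarrow> nat" where
  "edge_label_bot n d = restrict (\<lambda>k. edge_label n d (True, k)) {..<n}"

lemma point_index_inj: "x \<in> pts n \<Longrightarrow> y \<in> pts n \<Longrightarrow> point_index n x = point_index n y \<Longrightarrow> x = y"
  by (cases x; cases y) (auto simp: point_index_def pts_iff split: if_splits)

lemma boundary_label_edge_label:
  "x \<in> pts n \<Longrightarrow> boundary_label (edge_label_top n d) (edge_label_bot n d) x = edge_label n d x"
  by (cases x) (auto simp: boundary_label_def edge_label_top_def edge_label_bot_def pts_iff)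

context
  fixes n :: nat and d :: diagram
  assumes bd: "brauer_diagram n d"
begin

lemma edge_labels_in_labellings:
  assumes "2 * n \<le> N"
  shows "edge_label_top n d \<in> labellings N n" "edge_label_bot n d \<in> labellings N n"
proof -
  have "point_index n x < N" if "x \<in> pts n" for x
    using that assms by (cases x) (auto simp: point_index_def pts_iff)
  then have "edge_label n d x < N" if "x \<in> pts n" for x
    using that by (simp add: edge_label_def min_less_iff_disj)
  then show "edge_label_top n d \<in> labellings N n" "edge_label_bot n d \<in> labellings N n"
    unfolding labellings_def edge_label_top_def edge_label_bot_def by (auto simp: pts_iff)
qed

lemma tmat_edge_labels: "tmat n d (edge_label_top n d) (edge_label_bot n d) = 1"
proof -
  have "edge_label n d (d x) = edge_label n d x" if "x \<in> pts n" for x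
    using brauer_diagramD(3)[OF bd that] by (simp add: edge_label_def min.commute)
  then show ?thesis
    using brauer_diagramD(1)[OF bd] by (simp add: tmat_def edge_constant_def boundary_label_edge_label)
qed

lemma tmat_edge_labels_unique:
  assumes bd': "brauer_diagram n d'" and "tmat n d' (edge_label_top n d) (edge_label_bot n d) \<noteq> 0"
  shows "d' = d"
proof
  fix x
  show "d' x = d x"
  proof (cases "x \<in> pts n")
    case False
    then show ?thesis using brauer_diagramD(4) bd bd' by metis
  next
    case True
    have y: "d' x \<in> pts n" "d' x \<noteq> x" using brauer_diagramD(1,2)[OF bd' True] by auto
    have "edge_label n d (d' x) = edge_label n d x"
      using assms(2) True y(1) boundary_label_edge_label
      by (simp add: tmat_def edge_constant_def split: if_splits) metis
    then have "point_index n (d' x) = point_index n x \<or> point_index n (d' x) = point_index n (d x) \<or>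
        point_index n (d (d' x)) = point_index n x \<or> point_index n (d (d' x)) = point_index n (d x)"
      unfolding edge_label_def by (simp add: min_def split: if_splits)
    then have "d' x = x \<or> d' x = d x \<or> d (d' x) = x \<or> d (d' x) = d x"
      using point_index_inj y(1) True brauer_diagramD(1)[OF bd] by blast
    then show ?thesis using y brauer_diagramD(3)[OF bd] True by metis
  qed
qed

end

lemma tmat_faithful:
  assumes bd: "brauer_diagram n d" and bd': "brauer_diagram n d'" and N: "2 * n \<le> N" "2 \<le> N"
    and eq: "\<And>I K. I \<in> labellings N n \<Longrightarrow> K \<in> labellings N n \<Longrightarrow>
      N ^ c * tmat n d I K = N ^ c' * tmat n d' I K"
  shows "d' = d \<and> c = c'"
proof -
  have e: "N ^ c = N ^ c' * tmat n d' (edge_label_top n d) (edge_label_bot n d)"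
    using eq[OF edge_labels_in_labellings[OF bd N(1)]] tmat_edge_labels[OF bd] by simp
  moreover have "N ^ c \<noteq> 0" using N by simp
  ultimately have "tmat n d' (edge_label_top n d) (edge_label_bot n d) \<noteq> 0" by auto
  then have "d' = d" by (rule tmat_edge_labels_unique[OF bd bd'])
  then have "N ^ c = N ^ c'" using e tmat_edge_labels[OF bd] by simp
  then show ?thesis using N(2) \<open>d' = d\<close> by (simp add: power_inject_exp)
qed

lemma compose_assoc_loops:
  assumes b1: "brauer_diagram n d1" and b2: "brauer_diagram n d2" and b3: "brauer_diagram n d3"
  shows "compose n (compose n d1 d2) d3 = compose n d1 (compose n d2 d3) \<and>
    loops n d1 d2 + loops n (compose n d1 d2) d3 = loops n d2 d3 + loops n d1 (compose n d2 d3)"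
proof -
  define N where "N = 2 * n + 2"
  have N: "2 * n \<le> N" "2 \<le> N" unfolding N_def by auto
  note b12 = brauer_compose[OF b1 b2] and b23 = brauer_compose[OF b2 b3]
  have "N ^ (loops n d1 d2 + loops n (compose n d1 d2) d3) * tmat n (compose n (compose n d1 d2) d3) I K =
      N ^ (loops n d2 d3 + loops n d1 (compose n d2 d3)) * tmat n (compose n d1 (compose n d2 d3)) I K"
    if I: "I \<in> labellings N n" and K: "K \<in> labellings N n" for I K
  proof -
    note bounded = labellings_bounded[OF I] labellings_bounded[OF K] labellings_bounded
    have "N ^ (loops n d1 d2 + loops n (compose n d1 d2) d3) * tmat n (compose n (compose n d1 d2) d3) I K =
        N ^ loops n d1 d2 * (\<Sum>J\<in>labellings N n. tmat n (compose n d1 d2) I J * tmat n d3 J K)"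
      by (simp add: sum_tmat_compose[OF b12 b3 bounded(1,2)] power_add mult.assoc)
    also have "\<dots> = (\<Sum>J\<in>labellings N n. (\<Sum>J'\<in>labellings N n. tmat n d1 I J' * tmat n d2 J' J) * tmat n d3 J K)"
      using sum_tmat_compose[OF b1 b2 bounded(1,3)] by (simp add: sum_distrib_left mult.assoc)
    also have "\<dots> = (\<Sum>J'\<in>labellings N n. tmat n d1 I J' * (\<Sum>J\<in>labellings N n. tmat n d2 J' J * tmat n d3 J K))"
      by (simp add: sum_distrib_left sum_distrib_right mult.assoc) (rule sum.swap)
    also have "\<dots> = N ^ loops n d2 d3 * (\<Sum>J'\<in>labellings N n. tmat n d1 I J' * tmat n (compose n d2 d3) J' K)"
      using sum_tmat_compose[OF b2 b3 bounded(3,2)] by (simp add: sum_distrib_left mult_ac)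
    also have "\<dots> = N ^ (loops n d2 d3 + loops n d1 (compose n d2 d3)) * tmat n (compose n d1 (compose n d2 d3)) I K"
      by (simp add: sum_tmat_compose[OF b1 b23 bounded(1,2)] power_add mult.assoc)
    finally show ?thesis .
  qed
  from tmat_faithful[OF brauer_compose[OF b12 b3] brauer_compose[OF b1 b23] N this] show ?thesis
    by simp
qed

definition id_diagram :: "nat \<Rightarrow> diagram" where
  "id_diagram n x = (if x \<in> pts n then (\<not> fst x, snd x) else x)"

lemma brauer_id_diagram: "brauer_diagram n (id_diagram n)"
  by (auto simp: brauer_diagram_def id_diagram_def pts_iff)

lemma walled_id_diagram: "walled_diagram r s (id_diagram (r + s))"
  by (auto simp: walled_diagram_def brauer_id_diagram id_diagram_def left_of_wall_def)

lemma tmat_id_diagram: "tmat n (id_diagram n) I J = (if \<forall>k<n. I k = J k then 1 else 0)"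
proof -
  have "edge_constant n (id_diagram n) (boundary_label I J) \<longleftrightarrow> (\<forall>k<n. I k = J k)"
  proof
    assume "edge_constant n (id_diagram n) (boundary_label I J)"
    then have "boundary_label I J (id_diagram n (False, k)) = boundary_label I J (False, k)" if "k < n" for k
      using that unfolding edge_constant_def by (simp add: pts_iff)
    then show "\<forall>k<n. I k = J k" by (simp add: id_diagram_def boundary_label_def pts_iff)
  qed (auto simp: edge_constant_def id_diagram_def boundary_label_def pts_iff)
  then show ?thesis by (simp add: tmat_def)
qed

lemma sum_tmat_id_left:
  assumes I: "I \<in> labellings N n"
  shows "(\<Sum>J\<in>labellings N n. tmat n (id_diagram n) I J * tmat n d J K) = tmat n d I K"
proof -
  have "(\<Sum>J\<in>labellings N n. tmat n (id_diagram n) I J * tmat n d J K) =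
      (\<Sum>J\<in>labellings N n. if I = J then tmat n d J K else 0)"
  proof (rule sum.cong[OF refl])
    fix J assume J: "J \<in> labellings N n"
    show "tmat n (id_diagram n) I J * tmat n d J K = (if I = J then tmat n d J K else 0)"
    proof -
      have "tmat n (id_diagram n) I J = (if I = J then 1 else 0)"
        using labellings_eq_iff[OF I J] by (simp add: tmat_id_diagram)
      then show ?thesis by simp
    qed
  qed
  also have "\<dots> = tmat n d I K" using I by (simp add: finite_labellings)
  finally show ?thesis .
qed

lemma sum_tmat_id_right:
  assumes K: "K \<in> labellings N n"
  shows "(\<Sum>J\<in>labellings N n. tmat n d I J * tmat n (id_diagram n) J K) = tmat n d I K"
proof -
  have "(\<Sum>J\<in>labellings N n. tmat n d I J * tmat n (id_diagram n) J K) =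
      (\<Sum>J\<in>labellings N n. if J = K then tmat n d I J else 0)"
  proof (rule sum.cong[OF refl])
    fix J assume J: "J \<in> labellings N n"
    show "tmat n d I J * tmat n (id_diagram n) J K = (if J = K then tmat n d I J else 0)"
    proof -
      have "tmat n (id_diagram n) J K = (if J = K then 1 else 0)"
        using labellings_eq_iff[OF J K] by (simp add: tmat_id_diagram)
      then show ?thesis by simp
    qed
  qed
  also have "\<dots> = tmat n d I K" using K by (simp add: finite_labellings)
  finally show ?thesis .
qed

lemma compose_id_loops:
  assumes bd: "brauer_diagram n d"
  shows "compose n (id_diagram n) d = d \<and> loops n (id_diagram n) d = 0"
    and "compose n d (id_diagram n) = d \<and> loops n d (id_diagram n) = 0"
proof -
  define N where "N = 2 * n + 2"
  have N: "2 * n \<le> N" "2 \<le> N" unfolding N_def by auto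
  have left: "N ^ 0 * tmat n d I K = N ^ loops n (id_diagram n) d * tmat n (compose n (id_diagram n) d) I K"
    and right: "N ^ 0 * tmat n d I K = N ^ loops n d (id_diagram n) * tmat n (compose n d (id_diagram n)) I K"
    if I: "I \<in> labellings N n" and K: "K \<in> labellings N n" for I K
  proof -
    note bounded = labellings_bounded[OF I] labellings_bounded[OF K]
    show "N ^ 0 * tmat n d I K = N ^ loops n (id_diagram n) d * tmat n (compose n (id_diagram n) d) I K"
      using sum_tmat_id_left[OF I, of d K] sum_tmat_compose[OF brauer_id_diagram bd bounded] by simp
    show "N ^ 0 * tmat n d I K = N ^ loops n d (id_diagram n) * tmat n (compose n d (id_diagram n)) I K"
      using sum_tmat_id_right[OF K, of d I] sum_tmat_compose[OF bd brauer_id_diagram bounded] by simp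
  qed
  show "compose n (id_diagram n) d = d \<and> loops n (id_diagram n) d = 0"
    using tmat_faithful[OF bd brauer_compose[OF brauer_id_diagram bd] N left] by simp
  show "compose n d (id_diagram n) = d \<and> loops n d (id_diagram n) = 0"
    using tmat_faithful[OF bd brauer_compose[OF bd brauer_id_diagram] N right] by simp
qed

section \<open>Embedding B_{r,s} into B_{r+1,s+1}\<close>

text \<open>Strand k of a diagram on r + s strands is placed at top position \<alpha> k and bottom
  position \<beta> k of a diagram on r + s + 2 strands, where \<alpha> and \<beta> agree except at one
  strand k0. The two remaining positions in each row are joined: c to \<beta> k0 by a cap at the
  top and c to \<alpha> k0 by a cup at the bottom, both crossing the wall.\<close>

locale strand_embedding =
  fixes r s :: nat and \<alpha> \<beta> \<alpha>_inv \<beta>_inv :: "nat \<Rightarrow> nat" and c k0 :: nat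
  assumes k0_less: "k0 < r + s" and c_less: "c < Suc r + Suc s"
    and \<alpha>: "\<And>k. k < r + s \<Longrightarrow> \<alpha> k < Suc r + Suc s \<and> \<alpha> k \<noteq> c \<and> \<alpha> k \<noteq> \<beta> k0 \<and> \<alpha>_inv (\<alpha> k) = k"
    and \<alpha>_inv: "\<And>j. j < Suc r + Suc s \<Longrightarrow> j \<noteq> c \<Longrightarrow> j \<noteq> \<beta> k0 \<Longrightarrow> \<alpha>_inv j < r + s \<and> \<alpha> (\<alpha>_inv j) = j"
    and \<beta>: "\<And>k. k < r + s \<Longrightarrow> \<beta> k < Suc r + Suc s \<and> \<beta> k \<noteq> c \<and> \<beta> k \<noteq> \<alpha> k0 \<and> \<beta>_inv (\<beta> k) = k"
    and \<beta>_inv: "\<And>j. j < Suc r + Suc s \<Longrightarrow> j \<noteq> c \<Longrightarrow> j \<noteq> \<alpha> k0 \<Longrightarrow> \<beta>_inv j < r + s \<and> \<beta> (\<beta>_inv j) = j"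
    and \<alpha>_eq_\<beta>: "\<And>k. k < r + s \<Longrightarrow> k \<noteq> k0 \<Longrightarrow> \<alpha> k = \<beta> k"
    and \<alpha>_side: "\<And>k. k < r + s \<Longrightarrow> (\<alpha> k < Suc r \<longleftrightarrow> k < r)"
    and \<beta>_side: "\<And>k. k < r + s \<Longrightarrow> (\<beta> k < Suc r \<longleftrightarrow> k < r)"
    and cap_crosses: "(c < Suc r) \<noteq> (\<beta> k0 < Suc r)"
    and cup_crosses: "(c < Suc r) \<noteq> (\<alpha> k0 < Suc r)"
begin

abbreviation "n_small \<equiv> r + s"
abbreviation "n_big \<equiv> Suc r + Suc s"

definition emb_pt :: "pt \<Rightarrow> pt" where
  "emb_pt x = (fst x, if fst x then \<beta> (snd x) else \<alpha> (snd x))"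

definition unemb_pt :: "pt \<Rightarrow> pt" where
  "unemb_pt X = (fst X, if fst X then \<beta>_inv (snd X) else \<alpha>_inv (snd X))"

definition cap_pts :: "pt set" where
  "cap_pts = {(False, c), (False, \<beta> k0), (True, c), (True, \<alpha> k0)}"

definition lift :: "diagram \<Rightarrow> diagram" where
  "lift d X = (if X \<in> pts n_big then
      (if X = (False, c) then (False, \<beta> k0)
       else if X = (False, \<beta> k0) then (False, c)
       else if X = (True, c) then (True, \<alpha> k0)
       else if X = (True, \<alpha> k0) then (True, c)
       else emb_pt (d (unemb_pt X)))
     else X)"

lemma k0_positions: "\<beta> k0 < n_big" "\<beta> k0 \<noteq> c" "\<alpha> k0 < n_big" "\<alpha> k0 \<noteq> c" "\<alpha> k0 \<noteq> \<beta> k0"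
  using \<beta>[OF k0_less] \<alpha>[OF k0_less] by auto

lemma positions_less: "k < n_small \<Longrightarrow> \<alpha> k < Suc (Suc n_small)" "k < n_small \<Longrightarrow> \<beta> k < Suc (Suc n_small)"
  using \<alpha> \<beta> by auto

lemma emb_pt: "x \<in> pts n_small \<Longrightarrow> emb_pt x \<in> pts n_big \<and> emb_pt x \<notin> cap_pts \<and> unemb_pt (emb_pt x) = x"
  by (cases x) (auto simp: emb_pt_def unemb_pt_def cap_pts_def pts_iff \<alpha> \<beta> positions_less)

lemma unemb_pt: "X \<in> pts n_big \<Longrightarrow> X \<notin> cap_pts \<Longrightarrow> unemb_pt X \<in> pts n_small \<and> emb_pt (unemb_pt X) = X"
  by (cases X) (auto simp: emb_pt_def unemb_pt_def cap_pts_def pts_iff \<alpha>_inv \<beta>_inv)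

lemma wall_colour_emb_pt: "x \<in> pts n_small \<Longrightarrow> wall_colour (Suc r) (emb_pt x) = wall_colour r x"
  by (cases x) (auto simp: emb_pt_def wall_colour_def left_of_wall_def pts_iff \<alpha>_side \<beta>_side)

lemma cap_pts_in: "X \<in> cap_pts \<Longrightarrow> X \<in> pts n_big"
  using c_less k0_positions by (auto simp: cap_pts_def pts_iff)

lemma lift_emb_pt: "x \<in> pts n_small \<Longrightarrow> lift d (emb_pt x) = emb_pt (d x)"
  using emb_pt[of x] by (auto simp: lift_def cap_pts_def)

lemma lift_cap_pts: "lift d (False, c) = (False, \<beta> k0)" "lift d (False, \<beta> k0) = (False, c)"
   "lift d (True, c) = (True, \<alpha> k0)" "lift d (True, \<alpha> k0) = (True, c)"
  using cap_pts_in k0_positions by (auto simp: lift_def cap_pts_def)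

lemma lift_outside: "X \<notin> pts n_big \<Longrightarrow> lift d X = X"
  by (simp add: lift_def)

lemma brauer_lift:
  assumes bd: "brauer_diagram n_small d"
  shows "brauer_diagram n_big (lift d)"
proof -
  have "lift d X \<in> pts n_big \<and> lift d X \<noteq> X \<and> lift d (lift d X) = X" if X: "X \<in> pts n_big" for X
  proof (cases "X \<in> cap_pts")
    case True
    then show ?thesis using lift_cap_pts k0_positions cap_pts_in by (auto simp: cap_pts_def)
  next
    case False
    obtain x where x: "x \<in> pts n_small" "X = emb_pt x" using unemb_pt[OF X False] by metis
    show ?thesis using x brauer_diagramD[OF bd] lift_emb_pt emb_pt by metis
  qed
  then show ?thesis unfolding brauer_diagram_def using lift_outside by blast
qed

lemma walled_lift:
  assumes wd: "walled_diagram r s d"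
  shows "walled_diagram (Suc r) (Suc s) (lift d)"
  unfolding walled_diagram_iff_colour
proof (intro conjI ballI)
  have bd: "brauer_diagram n_small d" using wd by (rule walled_diagram_brauer)
  then show "brauer_diagram (Suc r + Suc s) (lift d)" by (rule brauer_lift)
  fix X assume X: "X \<in> pts (Suc r + Suc s)"
  show "wall_colour (Suc r) (lift d X) \<noteq> wall_colour (Suc r) X"
  proof (cases "X \<in> cap_pts")
    case True
    then show ?thesis
      using lift_cap_pts cap_crosses cup_crosses by (auto simp: cap_pts_def wall_colour_def left_of_wall_def)
  next
    case False
    obtain x where x: "x \<in> pts n_small" "X = emb_pt x" using unemb_pt[OF X False] by metis
    then show ?thesis
      using wd brauer_diagramD(1)[OF bd x(1)] lift_emb_pt[OF x(1)]
      by (simp add: walled_diagram_iff_colour wall_colour_emb_pt)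
  qed
qed

lemma lift_inj:
  assumes "brauer_diagram n_small d" "brauer_diagram n_small d'" "lift d = lift d'"
  shows "d = d'"
proof
  fix x
  show "d x = d' x"
  proof (cases "x \<in> pts n_small")
    case True
    then have "emb_pt (d x) = emb_pt (d' x)" using assms(3) lift_emb_pt by metis
    then show ?thesis using emb_pt brauer_diagramD(1)[OF assms(1) True] brauer_diagramD(1)[OF assms(2) True]
      by metis
  next
    case False
    then show ?thesis using brauer_diagramD(4) assms(1,2) by metis
  qed
qed

end

context strand_embedding
begin

lemma boundary_label_emb_pt: "boundary_label (I \<circ> \<alpha>) (J \<circ> \<beta>) x = boundary_label I J (emb_pt x)"
  by (simp add: boundary_label_def emb_pt_def)

lemma edge_constant_lift:
  assumes bd: "brauer_diagram n_small d"
  shows "edge_constant n_big (lift d) (boundary_label I J) \<longleftrightarrow>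
    (I c = I (\<beta> k0) \<and> J c = J (\<alpha> k0)) \<and> edge_constant n_small d (boundary_label (I \<circ> \<alpha>) (J \<circ> \<beta>))"
    (is "?big \<longleftrightarrow> ?caps \<and> ?small")
proof -
  have emb: "boundary_label I J (lift d (emb_pt x)) = boundary_label I J (emb_pt x) \<longleftrightarrow>
      boundary_label (I \<circ> \<alpha>) (J \<circ> \<beta>) (d x) = boundary_label (I \<circ> \<alpha>) (J \<circ> \<beta>) x"
    if "x \<in> pts n_small" for x
    using lift_emb_pt[OF that] by (simp add: boundary_label_emb_pt)
  have caps: "(\<forall>X\<in>cap_pts. boundary_label I J (lift d X) = boundary_label I J X) \<longleftrightarrow> ?caps"
    using k0_positions by (auto simp: cap_pts_def lift_cap_pts boundary_label_def)
  have "?big \<longleftrightarrow> (\<forall>X\<in>cap_pts. boundary_label I J (lift d X) = boundary_label I J X) \<and>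
      (\<forall>x\<in>pts n_small. boundary_label I J (lift d (emb_pt x)) = boundary_label I J (emb_pt x))"
  proof -
    have "pts n_big = cap_pts \<union> emb_pt ` pts n_small"
      using cap_pts_in emb_pt unemb_pt by (auto simp: image_iff) metis
    then show ?thesis unfolding edge_constant_def by blast
  qed
  also have "\<dots> \<longleftrightarrow> ?caps \<and> ?small"
    unfolding caps edge_constant_def using emb by simp
  finally show ?thesis .
qed

lemma tmat_lift:
  "brauer_diagram n_small d \<Longrightarrow> tmat n_big (lift d) I J =
    (if I c = I (\<beta> k0) \<and> J c = J (\<alpha> k0) then tmat n_small d (I \<circ> \<alpha>) (J \<circ> \<beta>) else 0)"
  using edge_constant_lift by (simp add: tmat_def)

text \<open>A middle labelling of the large stack that is constant on the cap and cup is the same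
  as a middle labelling of the small one: read it off at the positions \<beta> k.\<close>

definition restrict_middle :: "(nat \<Rightarrow> nat) \<Rightarrow> nat \<Rightarrow> nat" where
  "restrict_middle J = restrict (\<lambda>k. J (\<beta> k)) {..<n_small}"

definition extend_middle :: "(nat \<Rightarrow> nat) \<Rightarrow> nat \<Rightarrow> nat" where
  "extend_middle j = restrict (\<lambda>x. if x = c \<or> x = \<alpha> k0 then j k0 else j (\<beta>_inv x)) {..<n_big}"

lemma restrict_middle_in:
  "J \<in> labellings N n_big \<Longrightarrow> restrict_middle J \<in> labellings N n_small"
  using positions_less(2) by (auto simp: restrict_middle_def labellings_def restrict_PiE_iff)

lemma extend_middle_in:
  assumes j: "j \<in> labellings N n_small"
  shows "extend_middle j \<in> labellings N n_big" "extend_middle j c = extend_middle j (\<alpha> k0)"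
    "extend_middle j c = extend_middle j (\<beta> k0)"
proof -
  have "j k < N" if "k < n_small" for k using j that by (auto simp: labellings_def)
  then show "extend_middle j \<in> labellings N n_big"
    using k0_less \<beta>_inv unfolding extend_middle_def labellings_def by (auto simp: restrict_PiE_iff)
  show "extend_middle j c = extend_middle j (\<alpha> k0)" "extend_middle j c = extend_middle j (\<beta> k0)"
    using c_less k0_positions \<beta>[OF k0_less] by (auto simp: extend_middle_def)
qed

lemma bij_betw_restrict_middle:
  "bij_betw restrict_middle {J \<in> labellings N n_big. J c = J (\<alpha> k0) \<and> J c = J (\<beta> k0)} (labellings N n_small)"
proof (rule bij_betw_byWitness[where f' = extend_middle])
  show "\<forall>J\<in>{J \<in> labellings N n_big. J c = J (\<alpha> k0) \<and> J c = J (\<beta> k0)}. extend_middle (restrict_middle J) = J"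
  proof clarify
    fix J assume J: "J \<in> labellings N n_big" "J c = J (\<alpha> k0)" "J c = J (\<beta> k0)"
    show "extend_middle (restrict_middle J) = J"
    proof
      fix x
      show "extend_middle (restrict_middle J) x = J x"
      proof (cases "x < n_big")
        case True
        then show ?thesis
          using J(2,3) k0_less \<beta>_inv[OF True] by (auto simp: extend_middle_def restrict_middle_def)
      next
        case False
        then show ?thesis using J(1) by (simp add: extend_middle_def labellings_def PiE_def extensional_def)
      qed
    qed
  qed
  show "\<forall>j\<in>labellings N n_small. restrict_middle (extend_middle j) = j"
  proof
    fix j assume j: "j \<in> labellings N n_small"
    show "restrict_middle (extend_middle j) = j"
    proof
      fix k
      show "restrict_middle (extend_middle j) k = j k"
        using j \<beta>[of k] positions_less(2)[of k]
        by (cases "k < n_small")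
          (auto simp: restrict_middle_def extend_middle_def labellings_def PiE_def extensional_def)
    qed
  qed
  show "restrict_middle ` {J \<in> labellings N n_big. J c = J (\<alpha> k0) \<and> J c = J (\<beta> k0)} \<subseteq> labellings N n_small"
    using restrict_middle_in by blast
  show "extend_middle ` labellings N n_small \<subseteq> {J \<in> labellings N n_big. J c = J (\<alpha> k0) \<and> J c = J (\<beta> k0)}"
    using extend_middle_in by blast
qed

lemma sum_tmat_lift:
  assumes b1: "brauer_diagram n_small d1" and b2: "brauer_diagram n_small d2"
  shows "(\<Sum>J\<in>labellings N n_big. tmat n_big (lift d1) I J * tmat n_big (lift d2) J K) =
    (if I c = I (\<beta> k0) \<and> K c = K (\<alpha> k0)
     then (\<Sum>j\<in>labellings N n_small. tmat n_small d1 (I \<circ> \<alpha>) j * tmat n_small d2 j (K \<circ> \<beta>)) else 0)"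
proof (cases "I c = I (\<beta> k0) \<and> K c = K (\<alpha> k0)")
  case True
  define G where "G = {J \<in> labellings N n_big. J c = J (\<alpha> k0) \<and> J c = J (\<beta> k0)}"
  have "(\<Sum>J\<in>labellings N n_big. tmat n_big (lift d1) I J * tmat n_big (lift d2) J K) =
      (\<Sum>J\<in>labellings N n_big. if J c = J (\<alpha> k0) \<and> J c = J (\<beta> k0)
         then tmat n_small d1 (I \<circ> \<alpha>) (J \<circ> \<beta>) * tmat n_small d2 (J \<circ> \<alpha>) (K \<circ> \<beta>) else 0)"
    using True unfolding tmat_lift[OF b1] tmat_lift[OF b2] by (intro sum.cong refl) auto
  also have "\<dots> = (\<Sum>J\<in>G. tmat n_small d1 (I \<circ> \<alpha>) (J \<circ> \<beta>) * tmat n_small d2 (J \<circ> \<alpha>) (K \<circ> \<beta>))"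
    unfolding G_def by (simp add: sum.inter_filter[OF finite_labellings])
  also have "\<dots> = (\<Sum>J\<in>G. tmat n_small d1 (I \<circ> \<alpha>) (restrict_middle J) * tmat n_small d2 (restrict_middle J) (K \<circ> \<beta>))"
  proof (rule sum.cong[OF refl])
    fix J assume J: "J \<in> G"
    have "(J \<circ> \<alpha>) k = restrict_middle J k" if "k < n_small" for k
      using J that \<alpha>_eq_\<beta> by (cases "k = k0") (auto simp: G_def restrict_middle_def)
    then have "tmat n_small d2 (J \<circ> \<alpha>) (K \<circ> \<beta>) = tmat n_small d2 (restrict_middle J) (K \<circ> \<beta>)"
      by (intro tmat_cong[OF b2]) auto
    moreover have "tmat n_small d1 (I \<circ> \<alpha>) (J \<circ> \<beta>) = tmat n_small d1 (I \<circ> \<alpha>) (restrict_middle J)"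
      by (intro tmat_cong[OF b1]) (auto simp: restrict_middle_def)
    ultimately show "tmat n_small d1 (I \<circ> \<alpha>) (J \<circ> \<beta>) * tmat n_small d2 (J \<circ> \<alpha>) (K \<circ> \<beta>) =
        tmat n_small d1 (I \<circ> \<alpha>) (restrict_middle J) * tmat n_small d2 (restrict_middle J) (K \<circ> \<beta>)"
      by simp
  qed
  also have "\<dots> = (\<Sum>j\<in>labellings N n_small. tmat n_small d1 (I \<circ> \<alpha>) j * tmat n_small d2 j (K \<circ> \<beta>))"
    unfolding G_def by (rule sum.reindex_bij_betw[OF bij_betw_restrict_middle])
  finally show ?thesis using True by simp
next
  case False
  then have "tmat n_big (lift d1) I J * tmat n_big (lift d2) J K = 0" for J
    unfolding tmat_lift[OF b1] tmat_lift[OF b2] by auto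
  then have "(\<Sum>J\<in>labellings N n_big. tmat n_big (lift d1) I J * tmat n_big (lift d2) J K) = 0"
    by (rule sum.neutral[OF ballI])
  with False show ?thesis by auto
qed

lemma compose_lift_loops:
  assumes b1: "brauer_diagram n_small d1" and b2: "brauer_diagram n_small d2"
  shows "compose n_big (lift d1) (lift d2) = lift (compose n_small d1 d2) \<and>
    loops n_big (lift d1) (lift d2) = loops n_small d1 d2"
proof -
  define N where "N = 2 * n_big + 2"
  have N: "2 * n_big \<le> N" "2 \<le> N" unfolding N_def by auto
  note b12 = brauer_compose[OF b1 b2]
  have "N ^ loops n_small d1 d2 * tmat n_big (lift (compose n_small d1 d2)) I K =
      N ^ loops n_big (lift d1) (lift d2) * tmat n_big (compose n_big (lift d1) (lift d2)) I K"
    if I: "I \<in> labellings N n_big" and K: "K \<in> labellings N n_big" for I K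
  proof -
    have "label_bounded N n_small (I \<circ> \<alpha>)" "label_bounded N n_small (K \<circ> \<beta>)"
      using labellings_bounded[OF I] labellings_bounded[OF K] positions_less
      unfolding label_bounded_def by auto
    then have "N ^ loops n_small d1 d2 * tmat n_big (lift (compose n_small d1 d2)) I K =
        (\<Sum>J\<in>labellings N n_big. tmat n_big (lift d1) I J * tmat n_big (lift d2) J K)"
      using sum_tmat_lift[OF b1 b2] sum_tmat_compose[OF b1 b2] tmat_lift[OF b12] by simp
    also have "\<dots> = N ^ loops n_big (lift d1) (lift d2) * tmat n_big (compose n_big (lift d1) (lift d2)) I K"
      using sum_tmat_compose[OF brauer_lift[OF b1] brauer_lift[OF b2]]
        labellings_bounded[OF I] labellings_bounded[OF K] by simp
    finally show ?thesis .
  qed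
  from tmat_faithful[OF brauer_lift[OF b12] brauer_compose[OF brauer_lift[OF b1] brauer_lift[OF b2]] N this]
  show ?thesis by simp
qed

end

lemma compose_top_edge:
  assumes b1: "brauer_diagram n d1" and b2: "brauer_diagram n d2" and x: "x \<in> pts n"
    and "\<not> fst x" "\<not> fst (d1 x)"
  shows "compose n d1 d2 x = d1 x"
proof (rule compose_eqI[OF b1 b2 x brauer_diagramD(1,2)[OF b1 x]])
  have "(lift_top x, lift_top (d1 x)) \<in> stack_conn n d1 d2"
    using x unfolding stack_conn_def stack_edges_def by blast
  moreover have "lift_top x = outer x" "lift_top (d1 x) = outer (d1 x)"
    using assms(4,5) by (simp_all add: lift_top_def outer_def)
  ultimately show "(outer x, outer (d1 x)) \<in> stack_conn n d1 d2" by simp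
qed

lemma compose_bot_edge:
  assumes b1: "brauer_diagram n d1" and b2: "brauer_diagram n d2" and x: "x \<in> pts n"
    and "fst x" "fst (d2 x)"
  shows "compose n d1 d2 x = d2 x"
proof (rule compose_eqI[OF b1 b2 x brauer_diagramD(1,2)[OF b2 x]])
  have "(lift_bot x, lift_bot (d2 x)) \<in> stack_conn n d1 d2"
    using x unfolding stack_conn_def stack_edges_def by blast
  moreover have "lift_bot x = outer x" "lift_bot (d2 x) = outer (d2 x)"
    using assms(4,5) by (simp_all add: lift_bot_def outer_def)
  ultimately show "(outer x, outer (d2 x)) \<in> stack_conn n d1 d2" by simp
qed

context strand_embedding
begin

definition unlift :: "diagram \<Rightarrow> diagram" where
  "unlift D x = (if x \<in> pts n_small then unemb_pt (D (emb_pt x)) else x)"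

context
  fixes D assumes wD: "walled_diagram (Suc r) (Suc s) D"
    and cap: "D (False, c) = (False, \<beta> k0)" and cup: "D (True, c) = (True, \<alpha> k0)"
begin

lemma brauer_D: "brauer_diagram n_big D"
  using wD by (rule walled_diagram_brauer)

lemma D_cap_pts: "D (False, \<beta> k0) = (False, c)" "D (True, \<alpha> k0) = (True, c)"
  using brauer_diagramD(3)[OF brauer_D, of "(False, c)"] brauer_diagramD(3)[OF brauer_D, of "(True, c)"]
    cap cup cap_pts_in by (auto simp: cap_pts_def)

lemma D_notin_cap_pts:
  assumes "X \<in> pts n_big" "X \<notin> cap_pts"
  shows "D X \<notin> cap_pts"
proof
  assume "D X \<in> cap_pts"
  then have "D (D X) \<in> cap_pts" using cap cup D_cap_pts by (auto simp: cap_pts_def)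
  then show False using brauer_diagramD(3)[OF brauer_D assms(1)] assms(2) by simp
qed

lemma unlift_pts: "x \<in> pts n_small \<Longrightarrow> unlift D x \<in> pts n_small \<and> emb_pt (unlift D x) = D (emb_pt x)"
  using emb_pt brauer_diagramD(1)[OF brauer_D] D_notin_cap_pts unemb_pt by (simp add: unlift_def)

lemma walled_unlift: "walled_diagram r s (unlift D)"
  unfolding walled_diagram_iff_colour brauer_diagram_def
proof (intro conjI ballI allI impI)
  fix x assume x: "x \<in> pts (r + s)"
  note ux = unlift_pts[OF x] and uux = unlift_pts[OF conjunct1[OF unlift_pts[OF x]]]
  show "unlift D x \<in> pts (r + s)" using ux by simp
  show "unlift D x \<noteq> x" using ux brauer_diagramD(2)[OF brauer_D] emb_pt[OF x] by metis
  have "emb_pt (unlift D (unlift D x)) = emb_pt x"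
    using ux uux brauer_diagramD(3)[OF brauer_D] emb_pt[OF x] by metis
  then show "unlift D (unlift D x) = x" using emb_pt[OF x] emb_pt uux by metis
  have "wall_colour (Suc r) (D (emb_pt x)) \<noteq> wall_colour (Suc r) (emb_pt x)"
    using wD emb_pt[OF x] by (simp add: walled_diagram_iff_colour)
  then show "wall_colour r (unlift D x) \<noteq> wall_colour r x"
    using ux wall_colour_emb_pt x by metis
qed (simp add: unlift_def)

lemma lift_unlift: "lift (unlift D) = D"
proof
  fix X
  show "lift (unlift D) X = D X"
  proof (cases "X \<in> pts n_big")
    case False
    then show ?thesis using brauer_diagramD(4)[OF brauer_D] lift_outside by simp
  next
    case True
    show ?thesis
    proof (cases "X \<in> cap_pts")
      case True
      then show ?thesis using cap cup D_cap_pts lift_cap_pts by (auto simp: cap_pts_def)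
    next
      case False
      obtain x where x: "x \<in> pts n_small" "X = emb_pt x" using unemb_pt[OF \<open>X \<in> pts n_big\<close> False] by metis
      then show ?thesis using lift_emb_pt[OF x(1)] unlift_pts[OF x(1)] by simp
    qed
  qed
qed

end

definition corner :: diagram where
  "corner = lift (id_diagram n_small)"

lemma walled_corner: "walled_diagram (Suc r) (Suc s) corner"
  unfolding corner_def by (rule walled_lift[OF walled_id_diagram])

lemma corner_sandwich:
  assumes wD: "walled_diagram (Suc r) (Suc s) D"
  shows "\<exists>d. walled_diagram r s d \<and> compose n_big corner (compose n_big D corner) = lift d"
proof -
  have bD: "brauer_diagram n_big D" using wD by (rule walled_diagram_brauer)
  have bE: "brauer_diagram n_big corner" using walled_corner by (rule walled_diagram_brauer)
  have wDE: "walled_diagram (Suc r) (Suc s) (compose n_big D corner)"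
    using walled_compose[OF wD walled_corner] by simp
  have bDE: "brauer_diagram n_big (compose n_big D corner)" using wDE by (rule walled_diagram_brauer)
  have p: "(False, c) \<in> pts n_big" "(True, c) \<in> pts n_big" using cap_pts_in by (auto simp: cap_pts_def)
  have E: "corner (False, c) = (False, \<beta> k0)" "corner (True, c) = (True, \<alpha> k0)"
    unfolding corner_def using lift_cap_pts by auto
  have "compose n_big D corner (True, c) = (True, \<alpha> k0)"
    using compose_bot_edge[OF bD bE p(2)] E by simp
  then have "compose n_big corner (compose n_big D corner) (True, c) = (True, \<alpha> k0)"
    using compose_bot_edge[OF bE bDE p(2)] by simp
  moreover have "compose n_big corner (compose n_big D corner) (False, c) = (False, \<beta> k0)"
    using compose_top_edge[OF bE bDE p(1)] E by simp
  moreover have "walled_diagram (Suc r) (Suc s) (compose n_big corner (compose n_big D corner))"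
    using walled_compose[OF walled_corner wDE] by simp
  ultimately show ?thesis using walled_unlift lift_unlift by metis
qed

end

section \<open>The walled Brauer algebra\<close>

lemma compose_in_WB: "d1 \<in> WB r s \<Longrightarrow> d2 \<in> WB r s \<Longrightarrow> compose (r + s) d1 d2 \<in> WB r s"
  by (simp add: WB_def walled_compose)

lemma WB_brauer: "d \<in> WB r s \<Longrightarrow> brauer_diagram (r + s) d"
  by (simp add: WB_def walled_diagram_brauer)

lemma id_diagram_in_WB: "id_diagram (r + s) \<in> WB r s"
  by (simp add: WB_def walled_id_diagram)

lemma finite_WB: "finite (WB r s)"
proof -
  have "(\<lambda>d. restrict d (pts (r + s))) ` WB r s \<subseteq> pts (r + s) \<rightarrow>\<^sub>E pts (r + s)"
    using brauer_diagramD(1) WB_brauer by fastforce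
  moreover have "finite (pts (r + s) \<rightarrow>\<^sub>E pts (r + s))"
    by (rule finite_PiE) (auto simp: pts_def)
  moreover have "inj_on (\<lambda>d. restrict d (pts (r + s))) (WB r s)"
  proof (rule inj_onI)
    fix d d' assume d: "d \<in> WB r s" "d' \<in> WB r s"
      and eq: "restrict d (pts (r + s)) = restrict d' (pts (r + s))"
    show "d = d'"
    proof
      fix x show "d x = d' x"
        using eq brauer_diagramD(4)[OF WB_brauer[OF d(1)]] brauer_diagramD(4)[OF WB_brauer[OF d(2)]]
        by (cases "x \<in> pts (r + s)") (metis restrict_apply', simp)
    qed
  qed
  ultimately show ?thesis using finite_imageD finite_subset by blast
qed

lemma sum_collapse:
  fixes F :: "'a \<Rightarrow> 'b \<Rightarrow> 'k::field"
  assumes "finite A" "finite B" "finite C" "\<And>x y. x \<in> A \<Longrightarrow> y \<in> B \<Longrightarrow> g x y \<in> C"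
  shows "(\<Sum>e\<in>C. (\<Sum>x\<in>A. \<Sum>y\<in>B. if g x y = e then F x y else 0) * H e) =
         (\<Sum>x\<in>A. \<Sum>y\<in>B. F x y * H (g x y))"
proof -
  have "(\<Sum>e\<in>C. (\<Sum>x\<in>A. \<Sum>y\<in>B. if g x y = e then F x y else 0) * H e) =
        (\<Sum>e\<in>C. \<Sum>x\<in>A. \<Sum>y\<in>B. if g x y = e then F x y * H e else 0)"
    by (auto simp: sum_distrib_right intro!: sum.cong)
  also have "\<dots> = (\<Sum>x\<in>A. \<Sum>e\<in>C. \<Sum>y\<in>B. if g x y = e then F x y * H e else 0)"
    by (rule sum.swap)
  also have "\<dots> = (\<Sum>x\<in>A. \<Sum>y\<in>B. \<Sum>e\<in>C. if g x y = e then F x y * H e else 0)"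
    by (rule sum.cong[OF refl], rule sum.swap)
  also have "\<dots> = (\<Sum>x\<in>A. \<Sum>y\<in>B. F x y * H (g x y))"
    using assms by (auto intro!: sum.cong)
  finally show ?thesis .
qed

lemma wb_mult_carrier: "wb_mult r s \<delta> a b \<in> wb_carrier r s"
  unfolding wb_carrier_def wb_mult_def using compose_in_WB by (auto intro!: sum.neutral)

lemma wb_mult_assoc_expand_left:
  "wb_mult r s \<delta> (wb_mult r s \<delta> a b) c X =
    (\<Sum>d1\<in>WB r s. \<Sum>d2\<in>WB r s. \<Sum>d3\<in>WB r s. a d1 * b d2 * \<delta> ^ loops (r + s) d1 d2 *
      (if compose (r + s) (compose (r + s) d1 d2) d3 = X
       then c d3 * \<delta> ^ loops (r + s) (compose (r + s) d1 d2) d3 else 0))"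
proof -
  have "wb_mult r s \<delta> (wb_mult r s \<delta> a b) c X =
    (\<Sum>d3\<in>WB r s. \<Sum>e\<in>WB r s. (\<Sum>d1\<in>WB r s. \<Sum>d2\<in>WB r s. if compose (r + s) d1 d2 = e
         then a d1 * b d2 * \<delta> ^ loops (r + s) d1 d2 else 0) *
      (if compose (r + s) e d3 = X then c d3 * \<delta> ^ loops (r + s) e d3 else 0))"
    unfolding wb_mult_def by (subst sum.swap) (auto simp: mult.assoc intro!: sum.cong)
  also have "\<dots> = (\<Sum>d3\<in>WB r s. \<Sum>d1\<in>WB r s. \<Sum>d2\<in>WB r s. a d1 * b d2 * \<delta> ^ loops (r + s) d1 d2 *
      (if compose (r + s) (compose (r + s) d1 d2) d3 = X
       then c d3 * \<delta> ^ loops (r + s) (compose (r + s) d1 d2) d3 else 0))"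
    by (intro sum.cong refl sum_collapse finite_WB compose_in_WB)
  also have "\<dots> = (\<Sum>d1\<in>WB r s. \<Sum>d2\<in>WB r s. \<Sum>d3\<in>WB r s. a d1 * b d2 * \<delta> ^ loops (r + s) d1 d2 *
      (if compose (r + s) (compose (r + s) d1 d2) d3 = X
       then c d3 * \<delta> ^ loops (r + s) (compose (r + s) d1 d2) d3 else 0))"
    by (subst sum.swap) (rule sum.cong[OF refl], rule sum.swap)
  finally show ?thesis .
qed

lemma wb_mult_assoc_expand_right:
  "wb_mult r s \<delta> a (wb_mult r s \<delta> b c) X =
    (\<Sum>d1\<in>WB r s. \<Sum>d2\<in>WB r s. \<Sum>d3\<in>WB r s. b d2 * c d3 * \<delta> ^ loops (r + s) d2 d3 *
      (if compose (r + s) d1 (compose (r + s) d2 d3) = X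
       then a d1 * \<delta> ^ loops (r + s) d1 (compose (r + s) d2 d3) else 0))"
proof -
  have "wb_mult r s \<delta> a (wb_mult r s \<delta> b c) X =
    (\<Sum>d1\<in>WB r s. \<Sum>f\<in>WB r s. (\<Sum>d2\<in>WB r s. \<Sum>d3\<in>WB r s. if compose (r + s) d2 d3 = f
         then b d2 * c d3 * \<delta> ^ loops (r + s) d2 d3 else 0) *
      (if compose (r + s) d1 f = X then a d1 * \<delta> ^ loops (r + s) d1 f else 0))"
    unfolding wb_mult_def by (auto simp: mult_ac intro!: sum.cong)
  also have "\<dots> = (\<Sum>d1\<in>WB r s. \<Sum>d2\<in>WB r s. \<Sum>d3\<in>WB r s. b d2 * c d3 * \<delta> ^ loops (r + s) d2 d3 *
      (if compose (r + s) d1 (compose (r + s) d2 d3) = X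
       then a d1 * \<delta> ^ loops (r + s) d1 (compose (r + s) d2 d3) else 0))"
    by (intro sum.cong refl sum_collapse finite_WB compose_in_WB)
  finally show ?thesis .
qed

lemma wb_mult_assoc:
  "wb_mult r s \<delta> (wb_mult r s \<delta> a b) c = wb_mult r s \<delta> a (wb_mult r s \<delta> b c)"
proof
  fix X
  have "a d1 * b d2 * \<delta> ^ loops (r + s) d1 d2 *
        (if compose (r + s) (compose (r + s) d1 d2) d3 = X
         then c d3 * \<delta> ^ loops (r + s) (compose (r + s) d1 d2) d3 else 0) =
      b d2 * c d3 * \<delta> ^ loops (r + s) d2 d3 *
        (if compose (r + s) d1 (compose (r + s) d2 d3) = X
         then a d1 * \<delta> ^ loops (r + s) d1 (compose (r + s) d2 d3) else 0)"
    if "d1 \<in> WB r s" "d2 \<in> WB r s" "d3 \<in> WB r s" for d1 d2 d3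
  proof -
    note A = compose_assoc_loops[OF WB_brauer[OF that(1)] WB_brauer[OF that(2)] WB_brauer[OF that(3)]]
    then have "\<delta> ^ loops (r + s) d1 d2 * \<delta> ^ loops (r + s) (compose (r + s) d1 d2) d3 =
        \<delta> ^ loops (r + s) d2 d3 * \<delta> ^ loops (r + s) d1 (compose (r + s) d2 d3)"
      by (simp add: power_add[symmetric])
    then show ?thesis using A by (auto simp: algebra_simps)
  qed
  then show "wb_mult r s \<delta> (wb_mult r s \<delta> a b) c X = wb_mult r s \<delta> a (wb_mult r s \<delta> b c) X"
    unfolding wb_mult_assoc_expand_left wb_mult_assoc_expand_right by (intro sum.cong refl) auto
qed

lemma wb_mult_add_left:
  "wb_mult r s \<delta> (\<lambda>d. x d + y d) b = (\<lambda>d. wb_mult r s \<delta> x b d + wb_mult r s \<delta> y b d)"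
  unfolding wb_mult_def by (auto simp: sum.distrib[symmetric] algebra_simps intro!: sum.cong)

lemma wb_mult_add_right:
  "wb_mult r s \<delta> a (\<lambda>d. x d + y d) = (\<lambda>d. wb_mult r s \<delta> a x d + wb_mult r s \<delta> a y d)"
  unfolding wb_mult_def by (auto simp: sum.distrib[symmetric] algebra_simps intro!: sum.cong)

lemma wb_mult_smult_left:
  "wb_mult r s \<delta> (\<lambda>d. c * x d) b = (\<lambda>d. c * wb_mult r s \<delta> x b d)"
  unfolding wb_mult_def by (auto simp: sum_distrib_left algebra_simps intro!: sum.cong)

lemma wb_mult_smult_right:
  "wb_mult r s \<delta> a (\<lambda>d. c * x d) = (\<lambda>d. c * wb_mult r s \<delta> a x d)"
  unfolding wb_mult_def by (auto simp: sum_distrib_left algebra_simps intro!: sum.cong)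

lemma wb_mult_zero_left: "wb_mult r s \<delta> (\<lambda>_. 0) b = (\<lambda>_. 0)"
  unfolding wb_mult_def by (simp cong: if_cong)

lemma wb_mult_zero_right: "wb_mult r s \<delta> a (\<lambda>_. 0) = (\<lambda>_. 0)"
  unfolding wb_mult_def by (simp cong: if_cong)

definition diagram_vec :: "diagram \<Rightarrow> diagram \<Rightarrow> 'k::field" where
  "diagram_vec D X = (if X = D then 1 else 0)"

lemma diagram_vec_carrier: "D \<in> WB r s \<Longrightarrow> diagram_vec D \<in> wb_carrier r s"
  by (auto simp: wb_carrier_def diagram_vec_def)

lemma wb_mult_diagram_vec_right:
  assumes D: "D \<in> WB r s"
  shows "wb_mult r s \<delta> a (diagram_vec D) X =
    (\<Sum>d\<in>WB r s. if compose (r + s) d D = X then a d * \<delta> ^ loops (r + s) d D else 0)"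
proof -
  have "(\<Sum>d2\<in>WB r s. if compose (r + s) d1 d2 = X then a d1 * diagram_vec D d2 * \<delta> ^ loops (r + s) d1 d2 else 0) =
      (\<Sum>d2\<in>WB r s. if D = d2 then (if compose (r + s) d1 D = X then a d1 * \<delta> ^ loops (r + s) d1 D else 0) else 0)"
    for d1 by (intro sum.cong refl) (auto simp: diagram_vec_def)
  then show ?thesis using D finite_WB unfolding wb_mult_def by simp
qed

lemma wb_mult_diagram_vec_left:
  assumes D: "D \<in> WB r s"
  shows "wb_mult r s \<delta> (diagram_vec D) b X =
    (\<Sum>d\<in>WB r s. if compose (r + s) D d = X then b d * \<delta> ^ loops (r + s) D d else 0)"
proof -
  have "(\<Sum>d2\<in>WB r s. if compose (r + s) d1 d2 = X then diagram_vec D d1 * b d2 * \<delta> ^ loops (r + s) d1 d2 else 0) =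
      (if D = d1 then (\<Sum>d2\<in>WB r s. if compose (r + s) D d2 = X then b d2 * \<delta> ^ loops (r + s) D d2 else 0) else 0)"
    for d1 by (cases "D = d1") (simp_all add: diagram_vec_def cong: if_cong)
  then show ?thesis using D finite_WB unfolding wb_mult_def by simp
qed

lemma wb_mult_one_right:
  assumes "a \<in> wb_carrier r s"
  shows "wb_mult r s \<delta> a (diagram_vec (id_diagram (r + s))) = a"
proof
  fix X
  have "wb_mult r s \<delta> a (diagram_vec (id_diagram (r + s))) X = (\<Sum>d\<in>WB r s. if d = X then a d else 0)"
    unfolding wb_mult_diagram_vec_right[OF id_diagram_in_WB]
    by (intro sum.cong refl) (auto simp: compose_id_loops WB_brauer)
  also have "\<dots> = a X" using assms finite_WB unfolding wb_carrier_def by (auto simp: sum.delta')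
  finally show "wb_mult r s \<delta> a (diagram_vec (id_diagram (r + s))) X = a X" .
qed

lemma wb_mult_one_left:
  assumes "a \<in> wb_carrier r s"
  shows "wb_mult r s \<delta> (diagram_vec (id_diagram (r + s))) a = a"
proof
  fix X
  have "wb_mult r s \<delta> (diagram_vec (id_diagram (r + s))) a X = (\<Sum>d\<in>WB r s. if d = X then a d else 0)"
    unfolding wb_mult_diagram_vec_left[OF id_diagram_in_WB]
    by (intro sum.cong refl) (auto simp: compose_id_loops WB_brauer)
  also have "\<dots> = a X" using assms finite_WB unfolding wb_carrier_def by (auto simp: sum.delta')
  finally show "wb_mult r s \<delta> (diagram_vec (id_diagram (r + s))) a X = a X" .
qed

context strand_embedding
begin

lemma lift_in_WB: "d \<in> WB r s \<Longrightarrow> lift d \<in> WB (Suc r) (Suc s)"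
  by (simp add: WB_def walled_lift)

lemma lift_inj_WB: "d \<in> WB r s \<Longrightarrow> d' \<in> WB r s \<Longrightarrow> lift d = lift d' \<Longrightarrow> d = d'"
  using lift_inj WB_brauer by blast

lemma corner_in_WB: "corner \<in> WB (Suc r) (Suc s)"
  using walled_corner by (simp add: WB_def)

lemma sum_WB_lift:
  assumes "\<And>D. D \<in> WB (Suc r) (Suc s) \<Longrightarrow> D \<notin> lift ` WB r s \<Longrightarrow> f D = (0::'k::field)"
  shows "(\<Sum>D\<in>WB (Suc r) (Suc s). f D) = (\<Sum>d\<in>WB r s. f (lift d))"
proof -
  have "(\<Sum>D\<in>WB (Suc r) (Suc s). f D) = (\<Sum>D\<in>lift ` WB r s. f D)"
    by (rule sum.mono_neutral_right) (use assms lift_in_WB finite_WB in auto)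
  also have "\<dots> = (\<Sum>d\<in>WB r s. f (lift d))"
    by (rule sum.reindex_cong[of lift]) (auto simp: inj_on_def lift_inj_WB)
  finally show ?thesis .
qed

definition lift_vec :: "(diagram \<Rightarrow> 'k::field) \<Rightarrow> diagram \<Rightarrow> 'k" where
  "lift_vec y X = (\<Sum>d\<in>WB r s. if lift d = X then y d else 0)"

lemma lift_vec_lift: "d \<in> WB r s \<Longrightarrow> lift_vec y (lift d) = y d"
proof -
  assume d: "d \<in> WB r s"
  have "lift_vec y (lift d) = (\<Sum>d'\<in>WB r s. if d' = d then y d' else 0)"
    unfolding lift_vec_def using lift_inj_WB d by (intro sum.cong refl) auto
  then show ?thesis using d finite_WB by simp
qed

lemma lift_vec_outside: "X \<notin> lift ` WB r s \<Longrightarrow> lift_vec y X = 0"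
  unfolding lift_vec_def by (auto intro!: sum.neutral)

lemma lift_vec_zero: "lift_vec (\<lambda>_. 0) = (\<lambda>_. (0::'k::field))"
  unfolding lift_vec_def by (simp cong: if_cong)

lemma lift_vec_mult:
  "wb_mult (Suc r) (Suc s) \<delta> (lift_vec y) (lift_vec z) = lift_vec (wb_mult r s \<delta> y z)"
proof
  fix X
  have "wb_mult (Suc r) (Suc s) \<delta> (lift_vec y) (lift_vec z) X =
    (\<Sum>d1\<in>WB r s. \<Sum>d2\<in>WB r s. if compose n_big (lift d1) (lift d2) = X then
        y d1 * z d2 * \<delta> ^ loops n_big (lift d1) (lift d2) else 0)"
  proof -
    have "wb_mult (Suc r) (Suc s) \<delta> (lift_vec y) (lift_vec z) X =
      (\<Sum>d1\<in>WB r s. \<Sum>D2\<in>WB (Suc r) (Suc s). if compose n_big (lift d1) D2 = X then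
        lift_vec y (lift d1) * lift_vec z D2 * \<delta> ^ loops n_big (lift d1) D2 else 0)"
      unfolding wb_mult_def by (rule sum_WB_lift) (auto simp: lift_vec_outside intro!: sum.neutral)
    also have "\<dots> = (\<Sum>d1\<in>WB r s. \<Sum>d2\<in>WB r s. if compose n_big (lift d1) (lift d2) = X then
        lift_vec y (lift d1) * lift_vec z (lift d2) * \<delta> ^ loops n_big (lift d1) (lift d2) else 0)"
      by (rule sum.cong[OF refl], rule sum_WB_lift) (auto simp: lift_vec_outside)
    also have "\<dots> = (\<Sum>d1\<in>WB r s. \<Sum>d2\<in>WB r s. if compose n_big (lift d1) (lift d2) = X then
        y d1 * z d2 * \<delta> ^ loops n_big (lift d1) (lift d2) else 0)"
      by (intro sum.cong refl) (simp add: lift_vec_lift)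
    finally show ?thesis .
  qed
  also have "\<dots> = (\<Sum>d1\<in>WB r s. \<Sum>d2\<in>WB r s. if lift (compose n_small d1 d2) = X then
        y d1 * z d2 * \<delta> ^ loops n_small d1 d2 else 0)"
    using compose_lift_loops[OF WB_brauer WB_brauer] by (intro sum.cong refl) simp
  also have "\<dots> = lift_vec (wb_mult r s \<delta> y z) X"
  proof (cases "X \<in> lift ` WB r s")
    case True
    then obtain e where e: "e \<in> WB r s" "X = lift e" by blast
    have "lift_vec (wb_mult r s \<delta> y z) X = wb_mult r s \<delta> y z e"
      using lift_vec_lift[OF e(1)] e(2) by simp
    also have "\<dots> = (\<Sum>d1\<in>WB r s. \<Sum>d2\<in>WB r s. if lift (compose n_small d1 d2) = X then
        y d1 * z d2 * \<delta> ^ loops n_small d1 d2 else 0)"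
      unfolding wb_mult_def e(2) using lift_inj_WB[OF compose_in_WB e(1)] by (intro sum.cong refl) auto
    finally show ?thesis by simp
  next
    case False
    then have "lift (compose n_small d1 d2) \<noteq> X" if "d1 \<in> WB r s" "d2 \<in> WB r s" for d1 d2
      using compose_in_WB[OF that] by blast
    then show ?thesis using lift_vec_outside[OF False] by (auto intro!: sum.neutral)
  qed
  finally show "wb_mult (Suc r) (Suc s) \<delta> (lift_vec y) (lift_vec z) X = lift_vec (wb_mult r s \<delta> y z) X" .
qed

lemma corner_vec_eq: "diagram_vec corner = lift_vec (diagram_vec (id_diagram n_small))"
proof
  fix X
  have "lift_vec (diagram_vec (id_diagram n_small)) X =
      (\<Sum>d\<in>WB r s. if id_diagram n_small = d then (if lift d = X then 1 else 0) else 0)"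
    unfolding lift_vec_def diagram_vec_def by (intro sum.cong refl) auto
  then show "diagram_vec corner X = lift_vec (diagram_vec (id_diagram n_small)) X"
    using id_diagram_in_WB finite_WB unfolding diagram_vec_def corner_def by auto
qed

lemma lift_vec_corner:
  assumes "y \<in> wb_carrier r s"
  shows "wb_mult (Suc r) (Suc s) \<delta> (lift_vec y) (diagram_vec corner) = lift_vec y"
    and "wb_mult (Suc r) (Suc s) \<delta> (diagram_vec corner) (lift_vec y) = lift_vec y"
  unfolding corner_vec_eq lift_vec_mult wb_mult_one_right[OF assms] wb_mult_one_left[OF assms] by simp_all

lemma corner_sandwich_vec_outside:
  assumes X: "X \<notin> lift ` WB r s"
  shows "wb_mult (Suc r) (Suc s) \<delta> (diagram_vec corner) (wb_mult (Suc r) (Suc s) \<delta> a (diagram_vec corner)) X = 0"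
proof -
  have "wb_mult (Suc r) (Suc s) \<delta> a (diagram_vec corner) F = 0" if FX: "compose n_big corner F = X" for F
  proof -
    have "compose n_big D corner \<noteq> F" if "D \<in> WB (Suc r) (Suc s)" for D
    proof -
      have "compose n_big corner (compose n_big D corner) \<in> lift ` WB r s"
        using corner_sandwich[of D] that by (auto simp: WB_def)
      then show ?thesis using FX X by blast
    qed
    then show ?thesis
      unfolding wb_mult_diagram_vec_right[OF corner_in_WB] by (intro sum.neutral ballI) simp
  qed
  then show ?thesis
    unfolding wb_mult_diagram_vec_left[OF corner_in_WB] by (intro sum.neutral ballI) simp
qed

lemma corner_sandwich_vec:
  "\<exists>y\<in>wb_carrier r s. wb_mult (Suc r) (Suc s) \<delta> (diagram_vec corner)
      (wb_mult (Suc r) (Suc s) \<delta> a (diagram_vec corner)) = lift_vec y"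
proof -
  define f where "f = wb_mult (Suc r) (Suc s) \<delta> (diagram_vec corner)
      (wb_mult (Suc r) (Suc s) \<delta> a (diagram_vec corner))"
  define y where "y d = (if d \<in> WB r s then f (lift d) else 0)" for d
  have "lift_vec y X = f X" for X
  proof (cases "X \<in> lift ` WB r s")
    case True
    then obtain d where "d \<in> WB r s" "X = lift d" by blast
    then show ?thesis using lift_vec_lift[of d y] by (simp add: y_def)
  qed (simp add: lift_vec_outside corner_sandwich_vec_outside f_def)
  moreover have "y \<in> wb_carrier r s" by (simp add: wb_carrier_def y_def)
  ultimately show ?thesis unfolding f_def[symmetric] by (intro bexI[of _ y]) auto
qed

end

section \<open>Transfer of nilpotent ideals\<close>

inductive_set lin_span :: "(diagram \<Rightarrow> 'k::field) set \<Rightarrow> (diagram \<Rightarrow> 'k) set" for G where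
  zero: "(\<lambda>_. 0) \<in> lin_span G"
| gen: "g \<in> G \<Longrightarrow> g \<in> lin_span G"
| add: "x \<in> lin_span G \<Longrightarrow> y \<in> lin_span G \<Longrightarrow> (\<lambda>d. x d + y d) \<in> lin_span G"
| smult: "x \<in> lin_span G \<Longrightarrow> (\<lambda>d. c * x d) \<in> lin_span G"

lemma lin_span_carrier:
  assumes "G \<subseteq> wb_carrier r s" "x \<in> lin_span G"
  shows "x \<in> wb_carrier r s"
  using assms(2) by (induction x rule: lin_span.induct) (use assms(1) in \<open>auto simp: wb_carrier_def\<close>)

lemma lin_span_zero:
  assumes "G \<subseteq> {\<lambda>_. 0}" "x \<in> lin_span G"
  shows "x = (\<lambda>_. 0)"
  using assms(2) by (induction x rule: lin_span.induct) (use assms(1) in auto)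

lemma wb_prod_Cons: "xs \<noteq> [] \<Longrightarrow> wb_prod r s \<delta> (x # xs) = wb_mult r s \<delta> x (wb_prod r s \<delta> xs)"
  by (cases xs) auto

definition products :: "nat \<Rightarrow> nat \<Rightarrow> 'k::field \<Rightarrow> (diagram \<Rightarrow> 'k) set \<Rightarrow> nat \<Rightarrow> (diagram \<Rightarrow> 'k) set" where
  "products r s \<delta> I k = {wb_prod r s \<delta> zs | zs. length zs = k \<and> set zs \<subseteq> I}"

lemma productsI: "length zs = k \<Longrightarrow> set zs \<subseteq> I \<Longrightarrow> wb_prod r s \<delta> zs \<in> products r s \<delta> I k"
  unfolding products_def by blast

context
  fixes r s :: nat and \<delta> :: "'k::field" and I :: "(diagram \<Rightarrow> 'k) set"
  assumes ideal: "wb_ideal r s \<delta> I"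
begin

lemma ideal_carrier: "I \<subseteq> wb_carrier r s"
  using ideal by (simp add: wb_ideal_def)

lemma products_carrier:
  assumes "k \<ge> 1" "y \<in> products r s \<delta> I k"
  shows "y \<in> wb_carrier r s"
proof -
  have "wb_prod r s \<delta> zs \<in> wb_carrier r s" if "zs \<noteq> []" "set zs \<subseteq> I" for zs
    using that
  proof (induction zs)
    case (Cons z zs)
    then show ?case using ideal_carrier by (cases "zs = []") (auto simp: wb_prod_Cons wb_mult_carrier)
  qed simp
  moreover obtain zs where "y = wb_prod r s \<delta> zs" "length zs = k" "set zs \<subseteq> I"
    using assms(2) unfolding products_def by blast
  moreover have "zs \<noteq> []" using assms(1) \<open>length zs = k\<close> by auto
  ultimately show ?thesis by blast
qed

lemma products_Suc:
  assumes k: "k \<ge> 1" and y: "y \<in> products r s \<delta> I 1" and z: "z \<in> products r s \<delta> I k"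
    and \<phi>: "\<phi> \<in> wb_carrier r s"
  shows "wb_mult r s \<delta> y (wb_mult r s \<delta> \<phi> z) \<in> products r s \<delta> I (Suc k)"
proof -
  obtain y0 where y0: "y = y0" "y0 \<in> I" using y unfolding products_def by (auto simp: length_Suc_conv)
  obtain zs0 where zs0: "z = wb_prod r s \<delta> zs0" "length zs0 = k" "set zs0 \<subseteq> I"
    using z unfolding products_def by blast
  then obtain z1 zs where zs: "z = wb_prod r s \<delta> (z1 # zs)" "length zs + 1 = k" "set (z1 # zs) \<subseteq> I"
    using k by (cases zs0) auto
  have u: "wb_mult r s \<delta> \<phi> z1 \<in> I" using ideal \<phi> zs(3) by (simp add: wb_ideal_def)
  have "wb_mult r s \<delta> \<phi> z = wb_prod r s \<delta> (wb_mult r s \<delta> \<phi> z1 # zs)"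
    using zs(1) by (cases "zs = []") (simp_all add: wb_prod_Cons wb_mult_assoc)
  then have "wb_mult r s \<delta> y (wb_mult r s \<delta> \<phi> z) = wb_prod r s \<delta> (y0 # wb_mult r s \<delta> \<phi> z1 # zs)"
    using y0 by simp
  then show ?thesis using productsI[of "y0 # wb_mult r s \<delta> \<phi> z1 # zs"] y0 u zs by auto
qed

end

context strand_embedding
begin

context
  fixes \<delta> :: "'k::field"
begin

abbreviation "mult_big \<equiv> wb_mult (Suc r) (Suc s) \<delta>"

text \<open>The ideal A \<psi>(I) A of the large algebra generated by the image of an ideal I of the small
  one, filtered by the length of the products of I that are lifted.\<close>

definition lift_generators :: "(diagram \<Rightarrow> 'k) set \<Rightarrow> nat \<Rightarrow> (diagram \<Rightarrow> 'k) set" where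
  "lift_generators I k = {mult_big a (mult_big (lift_vec y) b) | a b y.
     a \<in> wb_carrier (Suc r) (Suc s) \<and> b \<in> wb_carrier (Suc r) (Suc s) \<and> y \<in> products r s \<delta> I k}"

lemma lift_generators_carrier: "lift_generators I k \<subseteq> wb_carrier (Suc r) (Suc s)"
  unfolding lift_generators_def using wb_mult_carrier by blast

lemma lin_span_mult_left:
  assumes a': "a' \<in> wb_carrier (Suc r) (Suc s)" and x: "x \<in> lin_span (lift_generators I k)"
  shows "mult_big a' x \<in> lin_span (lift_generators I k)"
  using x
proof (induction x rule: lin_span.induct)
  case (gen g)
  then obtain a b y where g: "g = mult_big a (mult_big (lift_vec y) b)"
    "b \<in> wb_carrier (Suc r) (Suc s)" "y \<in> products r s \<delta> I k"
    unfolding lift_generators_def by blast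
  then have "mult_big a' g = mult_big (mult_big a' a) (mult_big (lift_vec y) b)"
    by (simp add: wb_mult_assoc)
  then have "mult_big a' g \<in> lift_generators I k"
    unfolding lift_generators_def using g wb_mult_carrier by blast
  then show ?case by (rule lin_span.gen)
qed (simp_all add: wb_mult_zero_right wb_mult_add_right wb_mult_smult_right lin_span.intros)

lemma lin_span_mult_right:
  assumes b': "b' \<in> wb_carrier (Suc r) (Suc s)" and x: "x \<in> lin_span (lift_generators I k)"
  shows "mult_big x b' \<in> lin_span (lift_generators I k)"
  using x
proof (induction x rule: lin_span.induct)
  case (gen g)
  then obtain a b y where g: "g = mult_big a (mult_big (lift_vec y) b)"
    "a \<in> wb_carrier (Suc r) (Suc s)" "y \<in> products r s \<delta> I k"
    unfolding lift_generators_def by blast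
  then have "mult_big g b' = mult_big a (mult_big (lift_vec y) (mult_big b b'))"
    by (simp add: wb_mult_assoc)
  then have "mult_big g b' \<in> lift_generators I k"
    unfolding lift_generators_def using g wb_mult_carrier by blast
  then show ?case by (rule lin_span.gen)
qed (simp_all add: wb_mult_zero_left wb_mult_add_left wb_mult_smult_left lin_span.intros)

context
  fixes I assumes ideal: "wb_ideal r s \<delta> I"
begin

text \<open>\<psi>(y) c \<psi>(z) = \<psi>(y) (e c e) \<psi>(z) = \<psi>(y \<phi> z), where e c e = \<psi>(\<phi>).\<close>

lemma mult_lift_generators:
  assumes k: "k \<ge> 1" and g: "g \<in> lift_generators I 1" and h: "h \<in> lift_generators I k"
  shows "mult_big g h \<in> lift_generators I (Suc k)"
proof -
  obtain a b y where ab: "a \<in> wb_carrier (Suc r) (Suc s)" "b \<in> wb_carrier (Suc r) (Suc s)"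
    and y: "y \<in> products r s \<delta> I 1" and g: "g = mult_big a (mult_big (lift_vec y) b)"
    using g unfolding lift_generators_def by blast
  obtain a' b' z where ab': "a' \<in> wb_carrier (Suc r) (Suc s)" "b' \<in> wb_carrier (Suc r) (Suc s)"
    and z: "z \<in> products r s \<delta> I k" and h: "h = mult_big a' (mult_big (lift_vec z) b')"
    using h unfolding lift_generators_def by blast
  define c where "c = mult_big b a'"
  obtain \<phi> where \<phi>: "\<phi> \<in> wb_carrier r s"
    "mult_big (diagram_vec corner) (mult_big c (diagram_vec corner)) = lift_vec \<phi>"
    using corner_sandwich_vec by blast
  have yc: "y \<in> wb_carrier r s" and zc: "z \<in> wb_carrier r s"
    using products_carrier[OF ideal] y z k by auto
  have "mult_big (lift_vec y) (mult_big c (lift_vec z)) =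
      mult_big (mult_big (lift_vec y) (diagram_vec corner))
        (mult_big c (mult_big (diagram_vec corner) (lift_vec z)))"
    using lift_vec_corner[OF yc] lift_vec_corner[OF zc] by simp
  also have "\<dots> = mult_big (lift_vec y) (mult_big (lift_vec \<phi>) (lift_vec z))"
    by (simp add: \<phi>(2)[symmetric] wb_mult_assoc)
  also have "\<dots> = lift_vec (wb_mult r s \<delta> y (wb_mult r s \<delta> \<phi> z))"
    by (simp add: lift_vec_mult)
  finally have "mult_big (lift_vec y) (mult_big c (lift_vec z)) =
      lift_vec (wb_mult r s \<delta> y (wb_mult r s \<delta> \<phi> z))" .
  moreover have "mult_big g h = mult_big a (mult_big (mult_big (lift_vec y) (mult_big c (lift_vec z))) b')"
    unfolding g h c_def by (simp add: wb_mult_assoc)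
  ultimately have "mult_big g h = mult_big a (mult_big (lift_vec (wb_mult r s \<delta> y (wb_mult r s \<delta> \<phi> z))) b')"
    by simp
  moreover have "wb_mult r s \<delta> y (wb_mult r s \<delta> \<phi> z) \<in> products r s \<delta> I (Suc k)"
    by (rule products_Suc[OF ideal k y z \<phi>(1)])
  ultimately show ?thesis unfolding lift_generators_def using ab(1) ab'(2) by blast
qed

lemma mult_lin_span_lift_generators:
  assumes k: "k \<ge> 1" and x: "x \<in> lin_span (lift_generators I 1)" and w: "w \<in> lin_span (lift_generators I k)"
  shows "mult_big x w \<in> lin_span (lift_generators I (Suc k))"
  using x
proof (induction x rule: lin_span.induct)
  case (gen g)
  show ?case using w
  proof (induction w rule: lin_span.induct)
    case (gen h)
    then show ?case using mult_lift_generators[OF k \<open>g \<in> lift_generators I 1\<close>] by (simp add: lin_span.gen)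
  qed (simp_all add: wb_mult_zero_right wb_mult_add_right wb_mult_smult_right lin_span.intros)
qed (simp_all add: wb_mult_zero_left wb_mult_add_left wb_mult_smult_left lin_span.intros)

lemma wb_prod_lin_span_lift_generators:
  "xs \<noteq> [] \<Longrightarrow> set xs \<subseteq> lin_span (lift_generators I 1) \<Longrightarrow>
    wb_prod (Suc r) (Suc s) \<delta> xs \<in> lin_span (lift_generators I (length xs))"
proof (induction xs)
  case (Cons x xs)
  show ?case
  proof (cases "xs = []")
    case False
    then have "length xs \<ge> 1" by (cases xs) auto
    then show ?thesis
      using Cons False mult_lin_span_lift_generators by (simp add: wb_prod_Cons)
  qed (use Cons in simp)
qed simp

lemma ideal_lin_span_lift_generators: "wb_ideal (Suc r) (Suc s) \<delta> (lin_span (lift_generators I 1))"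
  unfolding wb_ideal_def
  using lin_span_carrier[OF lift_generators_carrier] lin_span_mult_left lin_span_mult_right
  by (auto intro: lin_span.intros)

lemma lift_generators_zero:
  assumes "\<forall>xs. length xs = m \<longrightarrow> set xs \<subseteq> I \<longrightarrow> wb_prod r s \<delta> xs = (\<lambda>_. 0)"
  shows "lift_generators I m \<subseteq> {\<lambda>_. 0}"
proof
  fix g assume "g \<in> lift_generators I m"
  then obtain a b y where g: "g = mult_big a (mult_big (lift_vec y) b)" "y \<in> products r s \<delta> I m"
    unfolding lift_generators_def by blast
  have "y = (\<lambda>_. 0)" using g(2) assms unfolding products_def by blast
  then show "g \<in> {\<lambda>_. 0}" using g(1) by (simp add: lift_vec_zero wb_mult_zero_left wb_mult_zero_right)
qed

lemma lift_vec_in_lin_span: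
  assumes y: "y \<in> I"
  shows "lift_vec y \<in> lin_span (lift_generators I 1)"
proof -
  have yc: "y \<in> wb_carrier r s" using y ideal_carrier[OF ideal] by auto
  have "y \<in> products r s \<delta> I 1" using productsI[of "[y]"] y by simp
  then have "mult_big (diagram_vec corner) (mult_big (lift_vec y) (diagram_vec corner)) \<in> lift_generators I 1"
    unfolding lift_generators_def using diagram_vec_carrier[OF corner_in_WB] by blast
  then show ?thesis using lift_vec_corner[OF yc] by (simp add: lin_span.gen)
qed

end

theorem not_semisimple_lift:
  assumes "\<not> wb_semisimple r s \<delta>"
  shows "\<not> wb_semisimple (Suc r) (Suc s) \<delta>"
proof -
  obtain I where nilpotent: "wb_nilpotent_ideal r s \<delta> I" and nonzero: "I \<noteq> {\<lambda>_. 0}"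
    using assms unfolding wb_semisimple_def by blast
  have ideal: "wb_ideal r s \<delta> I" using nilpotent by (simp add: wb_nilpotent_ideal_def)
  obtain m where m: "m > 0" "\<forall>xs. length xs = m \<longrightarrow> set xs \<subseteq> I \<longrightarrow> wb_prod r s \<delta> xs = (\<lambda>_. 0)"
    using nilpotent by (auto simp: wb_nilpotent_ideal_def)
  obtain y d where y: "y \<in> I" "y d \<noteq> 0"
    using nonzero ideal by (auto simp: wb_ideal_def)
  have d: "d \<in> WB r s" using y ideal_carrier[OF ideal] unfolding wb_carrier_def by blast
  define J where "J = lin_span (lift_generators I 1)"
  have "wb_prod (Suc r) (Suc s) \<delta> xs = (\<lambda>_. 0)" if "length xs = m" "set xs \<subseteq> J" for xs
    using wb_prod_lin_span_lift_generators[OF ideal, of xs] lin_span_zero[OF lift_generators_zero[OF ideal m(2)]]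
      that m(1) unfolding J_def by auto
  then have "wb_nilpotent_ideal (Suc r) (Suc s) \<delta> J"
    using ideal_lin_span_lift_generators[OF ideal] m(1) unfolding wb_nilpotent_ideal_def J_def by blast
  moreover have "J \<noteq> {\<lambda>_. 0}"
    using lift_vec_in_lin_span[OF ideal y(1)] lift_vec_lift[OF d, of y] y(2) unfolding J_def by force
  ultimately show ?thesis unfolding wb_semisimple_def by blast
qed

end

end

text \<open>For r > 0 the new strand sits just right of the wall and is tied to the last strand on
  the left; for s > 0 it sits just left of the wall and is tied to the first strand on the
  right.\<close>

lemma strand_embedding_left:
  assumes "0 < r"
  shows "strand_embedding r s (\<lambda>k. if k < r - 1 then k else if k = r - 1 then r else k + 2)
    (\<lambda>k. if k < r then k else k + 2)
    (\<lambda>j. if j < r - 1 then j else if j = r then r - 1 else j - 2)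
    (\<lambda>j. if j < r then j else j - 2) (r + 1) (r - 1)"
  using assms by unfold_locales auto

lemma strand_embedding_right:
  assumes "0 < s"
  shows "strand_embedding r s (\<lambda>k. if k < r then k else if k = r then r + 1 else k + 2)
    (\<lambda>k. if k < r then k else k + 2)
    (\<lambda>j. if j < r then j else if j = r + 1 then r else j - 2)
    (\<lambda>j. if j < r then j else j - 2) r r"
  using assms by unfold_locales auto

theorem corollary6p4:
  fixes \<delta> :: "'k::field" and p r s :: nat
  assumes "CHAR('k) = p" and "p > 0"
    and "\<delta> \<in> range (of_nat :: nat \<Rightarrow> 'k)"
    and "r \<noteq> 0 \<or> s \<noteq> 0"
    and "\<not> wb_semisimple r s \<delta>"
  shows "\<not> wb_semisimple (Suc r) (Suc s) \<delta>"
proof (cases "r = 0")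
  case False
  then show ?thesis
    using strand_embedding.not_semisimple_lift[OF strand_embedding_left] assms(5) by blast
next
  case True
  then show ?thesis
    using strand_embedding.not_semisimple_lift[OF strand_embedding_right] assms(4,5) by blast
qed

end
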